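(* Fix a wavelength $\lambda>0$, a numerical aperture $NA>0$, a constant $A>0$ and an angle $\theta$. Let $P(\mathbf f)=1$ if $|\mathbf f|<NA/\lambda$ and $P(\mathbf f)=0$ otherwise ($\mathbf f\in\mathbb R^2$). Let $q_n\ge 0$ be an illumination intensity supported in the half-disk $\{\boldsymbol\rho=(\rho\cos\varphi,\rho\sin\varphi): 0\le\rho<NA/\lambda,\ \varphi\in[\theta-\pi/2,\theta+\pi/2]\}$ (central illumination direction $\theta_0=\theta$). Define $$\widetilde H_n(\mathbf f)=iA\iint q_n(\boldsymbol\rho)P^*(\boldsymbol\rho)\big[P(\boldsymbol\rho+\mathbf f)-P(\boldsymbol\rho-\mathbf f)\big]\,d^2\boldsymbol\rho ,\qquad H_n=\mathcal F^{-1}\widetilde H_n .$$ Let $u_\theta(\mathbf r)=\operatorname{sign}\big(\mathbf r\cdot(\cos\theta,\sin\theta)\big)$ be the unit step whose edge is the line through the origin in direction $\mathbf v=(-\sin\theta,\cos\theta)$, and let $g=H_n\otimes u_\theta$. Then $|g(\mathbf r)|\le |g(t\mathbf v)|$ for every $\mathbf r\in\mathbb R^2$, where $t=\mathbf r\cdot\mathbf v$; i.e. the response magnitude is maximal along the line spanned by $\mathbf v$, so $H_n$ is an edge detection filter for edges drawn along $\mathbf v=(-\sin\theta,\cos\theta)$.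
   Context: $\mathcal F^{-1}$ denotes the inverse 2D Fourier transform and $\otimes$ 2D convolution. $P$ is the aberration-free pupil of the objective lens, $q_n$ the intensity of the oblique plane-wave illumination, and $\theta_0$ its central illumination direction. *)

theory Defs
  imports "HOL-Analysis.Analysis"
begin

definition pupil :: "real \<Rightarrow> real \<Rightarrow> real \<times> real \<Rightarrow> complex" where
  "pupil lam NA f = (if norm f < NA / lam then 1 else 0)"

definition half_disk :: "real \<Rightarrow> real \<Rightarrow> real \<Rightarrow> (real \<times> real) set" where
  "half_disk lam NA \<theta> = {(r * cos \<phi>, r * sin \<phi>) | r \<phi>.
      0 \<le> r \<and> r < NA / lam \<and> \<theta> - pi/2 \<le> \<phi> \<and> \<phi> \<le> \<theta> + pi/2}"

definition Htilde :: "real \<Rightarrow> real \<Rightarrow> real \<Rightarrow> (real \<times> real \<Rightarrow> real) \<Rightarrow> real \<times> real \<Rightarrow> complex" where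
  "Htilde A lam NA q f = \<i> * complex_of_real A *
     (LINT \<rho>|lborel. complex_of_real (q \<rho>) * cnj (pupil lam NA \<rho>) *
        (pupil lam NA (\<rho> + f) - pupil lam NA (\<rho> - f)))"

definition inv_FT2 :: "(real \<times> real \<Rightarrow> complex) \<Rightarrow> real \<times> real \<Rightarrow> complex" where
  "inv_FT2 F r = (LINT f|lborel. F f * cis (2 * pi * (f \<bullet> r)))"

definition step_edge :: "real \<Rightarrow> real \<times> real \<Rightarrow> complex" where
  "step_edge \<theta> r = complex_of_real (sgn (r \<bullet> (cos \<theta>, sin \<theta>)))"

text \<open>2D convolution (H (x) u)(r) = \<integral> H(r') u(r - r') d^2r', taken as the limit of the
  integrals over the discs of radius R as R \<rightarrow> \<infinity> (the step u is not integrable,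
  so the integral is understood as an improper one).\<close>
definition conv2 :: "(real \<times> real \<Rightarrow> complex) \<Rightarrow> (real \<times> real \<Rightarrow> complex) \<Rightarrow> real \<times> real \<Rightarrow> complex" where
  "conv2 H u r = Lim at_top (\<lambda>R::real.
      LINT r'|lborel. indicator (ball 0 R) r' * H r' * u (r - r'))"

end

theory Submission
  imports Defs "HOL-Probability.Characteristic_Functions"
begin

text \<open>
  Write \<open>Htilde = i A corr\<close>, where
  \<open>corr f = \<integral> q \<rho> (P (\<rho> + f) - P (\<rho> - f)) d\<rho>\<close>
  is real, odd, bounded and of compact support. Since \<open>q\<close> lives on the half-disk facing
  \<open>n = dir \<theta>\<close>, the point \<open>\<rho> - k n\<close> is never farther from the origin than
  \<open>\<rho> + k n\<close>, so \<open>corr (k n) \<le> 0\<close> for \<open>k \<ge> 0\<close>.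

  Plancherel's bound makes \<open>H\<close> integrable, hence \<open>g r = G (r \<bullet> n)\<close> with
  \<open>G s = \<integral> H r sgn (s - r \<bullet> n) dr\<close>. Damping along the edge and Fubini turn
  \<open>G s - G 0\<close> into the cosine transform \<open>rise s = \<integral> w k (1 - cos (2 pi k s)) dk\<close>
  of the nonnegative weight \<open>w k = - A corr (k n) / (pi k)\<close>. As \<open>H\<close> is odd,
  \<open>G s\<close> tends to \<open>0\<close> for \<open>s \<rightarrow> \<infinity>\<close>, so \<open>G 0 = - L\<close> with
  \<open>L = lim rise \<ge> 0\<close>. Finally \<open>rise \<le> 2 \<integral> w \<le> 2 L\<close>, the second inequality
  by averaging \<open>rise\<close> over \<open>[m, 2 m]\<close>; hence \<open>\<bar>G t\<bar> = \<bar>rise t - L\<bar> \<le> L = \<bar>G 0\<bar>\<close>.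
\<close>

section \<open>Rotations and products in the plane\<close>

lemma measurable_cis [measurable]: "cis \<in> borel_measurable borel"
  by (rule borel_measurable_continuous_onI) (intro continuous_intros)

definition rotation :: "real \<Rightarrow> real \<times> real \<Rightarrow> real \<times> real" where
  "rotation t x = (fst x * cos t - snd x * sin t, fst x * sin t + snd x * cos t)"

definition dir :: "real \<Rightarrow> real \<times> real" where
  "dir t = (cos t, sin t)"

definition dir_perp :: "real \<Rightarrow> real \<times> real" where
  "dir_perp t = (- sin t, cos t)"

lemma continuous_on_rotation: "continuous_on UNIV (rotation t)"
  unfolding rotation_def by (intro continuous_intros)

lemma measurable_rotation [measurable]: "rotation t \<in> borel_measurable borel"
  by (rule borel_measurable_continuous_onI[OF continuous_on_rotation])

lemma rotation_add: "rotation a (rotation b x) = rotation (a + b) x"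
  by (simp add: rotation_def cos_add sin_add algebra_simps)

lemma rotation_pi: "rotation pi x = - x"
  by (cases x) (simp add: rotation_def)

lemma rotation_axis: "rotation t (k, 0) = k *\<^sub>R dir t"
  by (simp add: rotation_def dir_def)

lemma norm_rotation: "norm (rotation t x) = norm x"
proof -
  have "(sin t)\<^sup>2 + (cos t)\<^sup>2 = 1" by simp
  then have "(fst x * cos t - snd x * sin t)\<^sup>2 + (fst x * sin t + snd x * cos t)\<^sup>2
      = (fst x)\<^sup>2 + (snd x)\<^sup>2"
    by algebra
  then show ?thesis by (simp add: rotation_def norm_prod_def)
qed

lemma norm_dir: "norm (dir t) = 1"
  by (simp add: dir_def norm_prod_def)

lemma inner_rotation_dir: "rotation t x \<bullet> dir t = fst x"
  by (simp add: rotation_def dir_def inner_prod_def algebra_simps)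
     (metis mult.commute distrib_left mult.right_neutral sin_cos_squared_add3
        power2_eq_square mult.left_commute)

lemma inner_rotation_dir_perp: "rotation t x \<bullet> dir_perp t = snd x"
  by (simp add: rotation_def dir_perp_def inner_prod_def algebra_simps)
     (metis mult.commute distrib_left mult.right_neutral sin_cos_squared_add3
        power2_eq_square mult.left_commute)

lemma inner_dir_dir_perp_expand:
  "f \<bullet> r = (f \<bullet> dir t) * (r \<bullet> dir t) + (f \<bullet> dir_perp t)
      * (r \<bullet> dir_perp t)"
proof -
  have "(fst f * cos t + snd f * sin t) * (fst r * cos t + snd r * sin t)
        + (- fst f * sin t + snd f * cos t) * (- fst r * sin t + snd r * cos t)
      = fst f * fst r * ((sin t)\<^sup>2 + (cos t)\<^sup>2) + snd f * snd r * ((sin t)\<^sup>2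
          + (cos t)\<^sup>2)"
    by algebra
  then show ?thesis by (simp add: inner_prod_def dir_def dir_perp_def)
qed

lemma nn_integral_lborel_pair:
  fixes f :: "real \<times> real \<Rightarrow> ennreal"
  assumes [measurable]: "f \<in> borel_measurable borel"
  shows "(\<integral>\<^sup>+x. f x \<partial>lborel)
      = (\<integral>\<^sup>+a. \<integral>\<^sup>+b. f (a, b) \<partial>lborel \<partial>lborel)"
proof -
  have "(\<integral>\<^sup>+x. f x \<partial>lborel)
      = (\<integral>\<^sup>+x. f x \<partial>(lborel \<Otimes>\<^sub>M lborel))"
    by (simp add: lborel_prod)
  also have "\<dots> = (\<integral>\<^sup>+a. \<integral>\<^sup>+b. f (a, b) \<partial>lborel
      \<partial>lborel)"
    by (rule lborel.nn_integral_fst[symmetric]) (simp add: lborel_prod)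
  finally show ?thesis .
qed

lemma nn_integral_affine_fst:
  fixes f :: "real \<times> real \<Rightarrow> ennreal"
  assumes [measurable]: "f \<in> borel_measurable borel" and co: "co \<noteq> 0"
  shows "(\<integral>\<^sup>+k. f ((k - si * y) / co, y) \<partial>lborel) = ennreal \<bar>co\<bar>
      * (\<integral>\<^sup>+x. f (x, y) \<partial>lborel)"
proof -
  have "(\<integral>\<^sup>+x. f (x, y) \<partial>lborel) = \<bar>1/co\<bar>
      * (\<integral>\<^sup>+k. f (- si * y / co + (1/co) * k, y) \<partial>lborel)"
    by (rule nn_integral_real_affine) (use co in auto)
  also have "(\<lambda>k. f (- si * y / co + (1/co) * k, y)) = (\<lambda>k. f ((k - si * y) / co, y))"
    by (auto simp: diff_divide_distrib)
  finally have "ennreal \<bar>co\<bar> * (\<integral>\<^sup>+x. f (x, y) \<partial>lborel)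
      = (ennreal \<bar>co\<bar> * ennreal (1/\<bar>co\<bar>)) * (\<integral>\<^sup>+k. f ((k - si
          * y) / co, y) \<partial>lborel)"
    by (simp add: mult.assoc)
  also have "ennreal \<bar>co\<bar> * ennreal (1/\<bar>co\<bar>) = 1"
    using co by (simp add: ennreal_mult[symmetric])
  finally show ?thesis by simp
qed

lemma nn_integral_rotation_slice:
  fixes f :: "real \<times> real \<Rightarrow> ennreal"
  assumes [measurable]: "f \<in> borel_measurable borel"
    and co: "co \<noteq> 0" and cs: "co * co + si * si = 1"
  shows "(\<integral>\<^sup>+w. f (k * co - w * si, k * si + w * co) \<partial>lborel)
    = ennreal (1/\<bar>co\<bar>) * (\<integral>\<^sup>+y. f ((k - si * y) / co, y) \<partial>lborel)"
proof -
  have "(k - si * (k * si + co * w)) / co = k * co - w * si" for w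
  proof -
    have "k - si * (k * si + co * w) = co * (k * co - w * si)" using cs by algebra
    then show ?thesis using co by simp
  qed
  then have "(\<integral>\<^sup>+y. f ((k - si * y) / co, y) \<partial>lborel)
      = \<bar>co\<bar> * (\<integral>\<^sup>+w. f (k * co - w * si, k * si + w * co) \<partial>lborel)"
    using nn_integral_real_affine[OF _ co, of "\<lambda>y. f ((k - si * y) / co, y)" "k * si"]
    by (simp add: mult.commute)
  then show ?thesis
    using co by (simp add: ennreal_mult[symmetric] mult.assoc[symmetric])
qed

text \<open>For \<open>cos t \<noteq> 0\<close> the rotation is,
    in each variable separately, an affine change of
  variables; the two Jacobians \<open>1/\<bar>cos t\<bar>\<close> and \<open>\<bar>cos
      t\<bar>\<close> cancel.\<close>
lemma nn_integral_rotation_cos_nonzero: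
  fixes f :: "real \<times> real \<Rightarrow> ennreal"
  assumes [measurable]: "f \<in> borel_measurable borel" and co: "cos t \<noteq> 0"
  shows "(\<integral>\<^sup>+x. f (rotation t x) \<partial>lborel)
      = (\<integral>\<^sup>+x. f x \<partial>lborel)"
proof -
  define co si where "co = cos t" and "si = sin t"
  have co0: "co \<noteq> 0" using co by (simp add: co_def)
  have cs: "co * co + si * si = 1"
    unfolding co_def si_def by (metis sin_cos_squared_add3 add.commute)
  have "(\<lambda>x. f (rotation t x)) \<in> borel_measurable borel" by measurable
  then have "(\<integral>\<^sup>+x. f (rotation t x) \<partial>lborel)
      = (\<integral>\<^sup>+k. \<integral>\<^sup>+w. f (k * co - w * si, k * si + w
          * co) \<partial>lborel \<partial>lborel)"
    by (simp add: nn_integral_lborel_pair rotation_def co_def si_def)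
  also have "\<dots> = ennreal (1/\<bar>co\<bar>)
      * (\<integral>\<^sup>+k. \<integral>\<^sup>+y. f ((k - si
      * y) / co, y) \<partial>lborel \<partial>lborel)"
    by (simp add: nn_integral_rotation_slice[OF _ co0 cs] nn_integral_cmult)
  also have "(\<integral>\<^sup>+k. \<integral>\<^sup>+y. f ((k - si
      * y) / co, y) \<partial>lborel \<partial>lborel)
      = (\<integral>\<^sup>+y. \<integral>\<^sup>+k. f ((k - si
          * y) / co, y) \<partial>lborel \<partial>lborel)"
    by (rule lborel_pair.Fubini'[symmetric]) measurable
  also have "\<dots> = ennreal \<bar>co\<bar>
      * (\<integral>\<^sup>+y. \<integral>\<^sup>+x. f (x, y) \<partial>lborel \<partial>lborel)"
    by (simp add: nn_integral_affine_fst[OF _ co0] nn_integral_cmult)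
  also have "(\<integral>\<^sup>+y. \<integral>\<^sup>+x. f (x, y) \<partial>lborel
      \<partial>lborel) = (\<integral>\<^sup>+x. \<integral>\<^sup>+y. f (x, y) \<partial>lborel
      \<partial>lborel)"
    by (rule lborel_pair.Fubini') measurable
  also have "\<dots> = (\<integral>\<^sup>+x. f x \<partial>lborel)"
    by (rule nn_integral_lborel_pair[symmetric]) simp
  finally show ?thesis
    using co0 by (simp add: mult.assoc[symmetric] ennreal_mult[symmetric])
qed

lemma nn_integral_rotation:
  fixes f :: "real \<times> real \<Rightarrow> ennreal"
  assumes [measurable]: "f \<in> borel_measurable borel"
  shows "(\<integral>\<^sup>+x. f (rotation t x) \<partial>lborel)
      = (\<integral>\<^sup>+x. f x \<partial>lborel)"
proof (cases "cos t = 0")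
  case False
  then show ?thesis by (rule nn_integral_rotation_cos_nonzero[OF assms])
next
  case True
  have "cos (t/2) \<noteq> 0"
  proof
    assume h: "cos (t/2) = 0"
    have "cos t = cos (2 * (t/2))" by simp
    also have "\<dots> = 2 * (cos (t/2))\<^sup>2 - 1" by (rule cos_double_cos)
    finally show False using h True by simp
  qed
  have [measurable]: "(\<lambda>x. f (rotation (t/2) x)) \<in> borel_measurable borel" by measurable
  have "(\<integral>\<^sup>+x. f (rotation t x) \<partial>lborel)
      = (\<integral>\<^sup>+x. f (rotation (t/2) (rotation (t/2) x)) \<partial>lborel)"
    by (simp add: rotation_add)
  also have "\<dots> = (\<integral>\<^sup>+x. f (rotation (t/2) x) \<partial>lborel)"
    by (rule nn_integral_rotation_cos_nonzero[where f="\<lambda>x. f (rotation (t/2) x)"]) fact+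
  also have "\<dots> = (\<integral>\<^sup>+x. f x \<partial>lborel)"
    by (rule nn_integral_rotation_cos_nonzero) fact+
  finally show ?thesis .
qed

lemma distr_rotation_lborel: "distr lborel borel (rotation t) = lborel"
proof (rule measure_eqI)
  fix A assume "A \<in> sets (distr lborel borel (rotation t))"
  then have A [measurable]: "A \<in> sets borel" by simp
  have "emeasure (distr lborel borel (rotation t)) A = emeasure lborel (rotation t -` A)"
    by (simp add: emeasure_distr)
  also have "\<dots> = (\<integral>\<^sup>+x. indicator A (rotation t x) \<partial>lborel)"
    by (subst nn_integral_indicator[symmetric])
       (use measurable_sets[OF measurable_rotation A]
           in \<open>simp_all add: indicator_vimage[symmetric]\<close>)
  also have "\<dots> = emeasure lborel A"
    by (subst nn_integral_rotation) simp_all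
  finally show "emeasure (distr lborel borel (rotation t)) A = emeasure lborel A" .
qed simp

lemma integrable_rotation_iff:
  fixes f :: "real \<times> real \<Rightarrow> 'b::{banach, second_countable_topology}"
  assumes [measurable]: "f \<in> borel_measurable borel"
  shows "integrable lborel (\<lambda>x. f (rotation t x)) \<longleftrightarrow> integrable lborel f"
  using integrable_distr_eq[of "rotation t" lborel borel f] by (simp add: distr_rotation_lborel)

lemma integral_rotation:
  fixes f :: "real \<times> real \<Rightarrow> 'b::{banach, second_countable_topology}"
  assumes [measurable]: "f \<in> borel_measurable borel"
  shows "(LINT x|lborel. f (rotation t x)) = (LINT x|lborel. f x)"
  using integral_distr[of "rotation t" lborel borel f] by (simp add: distr_rotation_lborel)

lemma integral_lborel_uminus:
  fixes f :: "real \<times> real \<Rightarrow> 'b::{banach, second_countable_topology}"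
  assumes [measurable]: "f \<in> borel_measurable borel"
  shows "(LINT x|lborel. f (- x)) = (LINT x|lborel. f x)"
  using integral_rotation[OF assms, of pi] by (simp add: rotation_pi)

lemma integral_lborel_translate:
  fixes f :: "'a::euclidean_space \<Rightarrow> 'b::{banach, second_countable_topology}"
  assumes [measurable]: "f \<in> borel_measurable borel"
  shows "(LINT x|lborel. f (c + x)) = (LINT x|lborel. f x)"
  using integral_distr[of "(+) c" lborel borel f] by (simp add: lborel_distr_plus)

lemma sets_borel_ball [measurable]: "ball (c::'a::euclidean_space) r \<in> sets borel"
  by simp

lemma integrable_bounded_ball_support:
  fixes g :: "'a::euclidean_space \<Rightarrow> 'b::{banach, second_countable_topology}"
  assumes [measurable]: "g \<in> borel_measurable borel" and "\<And>x. norm (g x) \<le> M"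
    and "\<And>x. x \<notin> ball 0 r \<Longrightarrow> g x = 0"
  shows "integrable lborel g"
  by (rule integrableI_bounded_set[where A="ball 0 r" and B=M])
     (use assms emeasure_lborel_ball_finite in auto)

lemma integrable_pair_product:
  fixes f :: "'a \<Rightarrow> 'c::{real_normed_field, banach, second_countable_topology}"
  assumes "sigma_finite_measure M1" and "sigma_finite_measure M2"
    and f: "integrable M1 f" and g: "integrable M2 g"
  shows "integrable (M1 \<Otimes>\<^sub>M M2) (\<lambda>x. f (fst x) * g (snd x))"
proof -
  interpret pair_sigma_finite M1 M2 using assms(1,2) by (simp add: pair_sigma_finite_def)
  have [measurable]: "f \<in> borel_measurable M1" "g \<in> borel_measurable M2"
    using f g by auto
  show ?thesis
    by (rule Fubini_integrable) (simp_all add: norm_mult integrable_mult_left integrable_mult_right f g)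
qed

lemma integral_pair_product:
  fixes f :: "'a \<Rightarrow> 'c::{real_normed_field, banach, second_countable_topology}"
  assumes "sigma_finite_measure M1" and "sigma_finite_measure M2"
    and f: "integrable M1 f" and g: "integrable M2 g"
  shows "(LINT x|(M1 \<Otimes>\<^sub>M M2). f (fst x) * g (snd x)) = (LINT x|M1. f x) * (LINT x|M2. g x)"
proof -
  interpret pair_sigma_finite M1 M2 using assms(1,2) by (simp add: pair_sigma_finite_def)
  show ?thesis
    using integral_fst[of "\<lambda>x y. f x * g y"] integrable_pair_product[OF assms]
    by (simp add: case_prod_beta')
qed

lemma integrable_lborel_product:
  fixes f g :: "real \<Rightarrow> 'c::{real_normed_field, banach, second_countable_topology}"
  assumes "integrable lborel f" and "integrable lborel g"
  shows "integrable (lborel \<Otimes>\<^sub>M lborel) (\<lambda>x. f (fst x) * g (snd x))"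
  by (rule integrable_pair_product[OF sigma_finite_lborel sigma_finite_lborel assms])

lemma integrable_dir_product:
  fixes g h :: "real \<Rightarrow> 'b::{real_normed_field, banach, second_countable_topology}"
  assumes g: "integrable lborel g" and h: "integrable lborel h"
  shows "integrable lborel (\<lambda>r. g (r \<bullet> dir t) * h (r \<bullet> dir_perp t))"
proof -
  have [measurable]: "g \<in> borel_measurable borel" "h \<in> borel_measurable borel"
    using g h by auto
  have "integrable lborel (\<lambda>x. g (rotation t x \<bullet> dir t)
      * h (rotation t x \<bullet> dir_perp t))"
    using integrable_lborel_product[OF g h]
    by (simp add: lborel_prod inner_rotation_dir inner_rotation_dir_perp)
  then show ?thesis by (subst (asm) integrable_rotation_iff) simp_all
qed

lemma integral_dir_product:
  fixes g h :: "real \<Rightarrow> 'b::{real_normed_field, banach, second_countable_topology}"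
  assumes g: "integrable lborel g" and h: "integrable lborel h"
  shows "(LINT r|lborel. g (r \<bullet> dir t) * h (r \<bullet> dir_perp t)) = (LINT x|lborel. g x)
      * (LINT x|lborel. h x)"
proof -
  have [measurable]: "g \<in> borel_measurable borel" "h \<in> borel_measurable borel"
    using g h by auto
  have "(LINT r|lborel. g (r \<bullet> dir t) * h (r \<bullet> dir_perp t))
      = (LINT x|lborel. g (rotation t x \<bullet> dir t) * h (rotation t x \<bullet> dir_perp t))"
    by (subst integral_rotation) simp_all
  also have "\<dots> = (LINT x|(lborel \<Otimes>\<^sub>M lborel). g (fst x) * h (snd x))"
    by (simp add: inner_rotation_dir inner_rotation_dir_perp lborel_prod)
  also have "\<dots> = (LINT x|lborel. g x) * (LINT x|lborel. h x)"
    by (rule integral_pair_product[OF sigma_finite_lborel sigma_finite_lborel g h])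
  finally show ?thesis .
qed

section \<open>Gaussian damping factors and their Fourier transforms\<close>

lemma integrable_std_normal_density: "integrable lborel std_normal_density"
  using integrable_std_normal_moment[of 0] by simp

lemma integral_std_normal_density: "(LINT x|lborel. std_normal_density x) = 1"
  using integral_std_normal_moment_even[of 0] by simp

lemma integrable_std_normal_density_scaled:
  assumes "\<sigma> > 0"
  shows "integrable lborel (\<lambda>u. std_normal_density (u / \<sigma>))"
proof -
  have "integrable lborel (\<lambda>u. std_normal_density (0 + (1/\<sigma>) * u))"
    by (rule lborel_integrable_real_affine[OF integrable_std_normal_density]) (use assms in simp)
  then show ?thesis by simp
qed

lemma fourier_std_normal_density_scaled:
  assumes "\<sigma> > 0"
  shows "(LINT u|lborel. complex_of_real (std_normal_density (u / \<sigma>)) * cis (\<omega> * u))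
    = complex_of_real (\<sigma> * exp (- (\<omega> * \<sigma>)\<^sup>2 / 2))"
proof -
  have "(LINT u|lborel. complex_of_real (std_normal_density (u / \<sigma>)) * cis (\<omega> * u))
      = \<bar>\<sigma>\<bar> *\<^sub>R (LINT x|lborel. complex_of_real (std_normal_density ((0
          + \<sigma> * x) / \<sigma>))
          * cis (\<omega> * (0 + \<sigma> * x)))"
    by (rule lborel_integral_real_affine) (use assms in simp)
  also have "(LINT x|lborel. complex_of_real (std_normal_density ((0 + \<sigma> * x) / \<sigma>))
      * cis (\<omega> * (0 + \<sigma> * x)))
      = (LINT x|lborel. std_normal_density x *\<^sub>R iexp ((\<omega> * \<sigma>) * x))"
    using assms by (intro Bochner_Integration.integral_cong) (auto simp: cis_conv_exp
        scaleR_conv_of_real mult_ac)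
  also have "\<dots> = char std_normal_distribution (\<omega> * \<sigma>)"
    unfolding char_def by (subst integral_density) auto
  also have "\<dots> = complex_of_real (exp (- (\<omega> * \<sigma>)\<^sup>2 / 2))"
    by (simp add: char_std_normal_distribution)
  finally show ?thesis using assms by (simp add: scaleR_conv_of_real)
qed

definition gauss_damp :: "real \<Rightarrow> real \<Rightarrow> real" where
  "gauss_damp m y = exp (- (y / m)\<^sup>2 / 2)"

definition gauss_kernel :: "real \<Rightarrow> real \<Rightarrow> real" where
  "gauss_kernel m w = 2 * pi * m * std_normal_density (2 * pi * m * w)"

lemma gauss_damp_eq: "gauss_damp m y = sqrt (2 * pi) * std_normal_density (y / m)"
  by (simp add: gauss_damp_def normal_density_def)

lemma measurable_gauss_damp [measurable]: "gauss_damp m \<in> borel_measurable borel"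
  unfolding gauss_damp_def by measurable

lemma gauss_damp_nonneg: "gauss_damp m y \<ge> 0"
  by (simp add: gauss_damp_def)

lemma gauss_damp_le_1: "gauss_damp m y \<le> 1"
  by (simp add: gauss_damp_def)

lemma gauss_damp_mono:
  assumes "0 < s" "s \<le> t"
  shows "gauss_damp s y \<le> gauss_damp t y"
proof -
  have "s\<^sup>2 \<le> t\<^sup>2" using assms by (intro power_mono) auto
  then have "y\<^sup>2 / t\<^sup>2 \<le> y\<^sup>2 / s\<^sup>2"
    using assms by (intro frac_le) auto
  moreover have "(y / s)\<^sup>2 = y\<^sup>2 / s\<^sup>2" "(y / t)\<^sup>2 = y\<^sup>2 / t\<^sup>2"
    by (simp_all add: power_divide)
  ultimately have "- (y / s)\<^sup>2 / 2 \<le> - (y / t)\<^sup>2 / 2"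
    by linarith
  then show ?thesis
    unfolding gauss_damp_def exp_le_cancel_iff .
qed

lemma gauss_damp_tendsto_1: "(\<lambda>j. gauss_damp (real (Suc j)) y) \<longlonglongrightarrow> 1"
proof -
  have e: "gauss_damp (real (Suc j)) y = exp (- (y * inverse (real (Suc j)))\<^sup>2 / 2)" for j
    unfolding gauss_damp_def divide_inverse ..
  have "isCont (\<lambda>x. exp (- (y * x)\<^sup>2 / 2)) 0"
    by (intro continuous_intros) simp
  from isCont_tendsto_compose[OF this LIMSEQ_inverse_real_of_nat]
  show ?thesis unfolding e by simp
qed

lemma integrable_gauss_damp: "m > 0 \<Longrightarrow> integrable lborel (gauss_damp m)"
  unfolding gauss_damp_eq[abs_def] by (intro integrable_mult_right integrable_std_normal_density_scaled)

lemma integrable_gauss_damp_cis: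
  "m > 0 \<Longrightarrow> integrable lborel (\<lambda>x. complex_of_real (gauss_damp m x) * cis (c * x))"
  by (rule Bochner_Integration.integrable_bound[OF integrable_norm[OF integrable_gauss_damp]])
     (auto simp: norm_mult)

lemma fourier_gauss_damp:
  assumes m: "m > 0"
  shows "(LINT y|lborel. complex_of_real (gauss_damp m y) * cis (2 * pi * w * y))
    = complex_of_real (gauss_kernel m w)"
proof -
  have "(LINT y|lborel. complex_of_real (gauss_damp m y) * cis (2 * pi * w * y)) =
      complex_of_real (sqrt (2 * pi))
        * (LINT y|lborel. complex_of_real (std_normal_density (y / m)) * cis ((2 * pi * w) * y))"
    by (simp add: gauss_damp_eq mult.assoc)
  also have "\<dots> = complex_of_real (sqrt (2 * pi) * (m * exp (- ((2 * pi * w) * m)\<^sup>2 / 2)))"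
    by (simp add: fourier_std_normal_density_scaled[OF m])
  also have "sqrt (2 * pi) * (m * exp (- ((2 * pi * w) * m)\<^sup>2 / 2)) = gauss_kernel m w"
  proof -
    have "sqrt (2 * pi) * sqrt (2 * pi) = 2 * pi" by simp
    then have "(2 * pi) / sqrt (2 * pi) = sqrt (2 * pi)"
      by (metis nonzero_mult_div_cancel_right real_sqrt_eq_zero_cancel_iff mult_eq_0_iff
          zero_neq_numeral pi_neq_zero)
    moreover have "gauss_kernel m w = (2 * pi) / sqrt (2 * pi) * m * exp (- (2 * pi * m * w)\<^sup>2 / 2)"
      by (simp add: gauss_kernel_def normal_density_def)
    ultimately show ?thesis by (simp add: mult_ac)
  qed
  finally show ?thesis .
qed

lemma measurable_gauss_kernel [measurable]: "gauss_kernel m \<in> borel_measurable borel"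
  unfolding gauss_kernel_def by measurable

lemma gauss_kernel_nonneg: "m > 0 \<Longrightarrow> gauss_kernel m w \<ge> 0"
  by (simp add: gauss_kernel_def normal_density_nonneg)

lemma integrable_gauss_kernel:
  assumes "m > 0"
  shows "integrable lborel (gauss_kernel m)"
proof -
  have "integrable lborel (\<lambda>w. 2 * pi * m * std_normal_density (0 + (2 * pi * m) * w))"
    by (intro integrable_mult_right lborel_integrable_real_affine[OF integrable_std_normal_density])
       (use assms in simp)
  then show ?thesis by (simp add: gauss_kernel_def[abs_def])
qed

lemma gauss_kernel_shift:
  assumes "m > 0"
  shows "integrable lborel (\<lambda>t. gauss_kernel m (a - t))"
    and "(LINT t|lborel. gauss_kernel m (a - t)) = 1"
proof -
  define c where "c = 2 * pi * m"
  have c: "c > 0" using assms by (simp add: c_def)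
  have i0: "integrable lborel (\<lambda>u. c * std_normal_density u)"
    using integrable_std_normal_density by simp
  have e: "gauss_kernel m (a - t) = c * std_normal_density (c * a + (- c) * t)" for t
    by (simp add: gauss_kernel_def c_def algebra_simps)
  show "integrable lborel (\<lambda>t. gauss_kernel m (a - t))"
    unfolding e by (rule lborel_integrable_real_affine[OF i0]) (use c in simp)
  have "(LINT u|lborel. c * std_normal_density u)
      = \<bar>- c\<bar> *\<^sub>R (LINT t|lborel. c * std_normal_density (c * a + (- c) * t))"
    by (rule lborel_integral_real_affine) (use c in simp)
  then show "(LINT t|lborel. gauss_kernel m (a - t)) = 1"
    unfolding e using c by (simp add: integral_std_normal_density)
qed

definition gauss_window :: "real \<Rightarrow> real \<times> real \<Rightarrow> real" where
  "gauss_window \<sigma> \<xi> = gauss_damp \<sigma> (fst \<xi>) * gauss_damp \<sigma> (snd \<xi>)"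

definition gauss_kernel2 :: "real \<Rightarrow> real \<times> real \<Rightarrow> real" where
  "gauss_kernel2 \<sigma> z = gauss_kernel \<sigma> (fst z) * gauss_kernel \<sigma> (snd z)"

lemma measurable_gauss_window [measurable]: "gauss_window \<sigma> \<in> borel_measurable borel"
  unfolding gauss_window_def borel_prod[symmetric] by measurable

lemma measurable_gauss_kernel2 [measurable]: "gauss_kernel2 \<sigma> \<in> borel_measurable borel"
  unfolding gauss_kernel2_def borel_prod[symmetric] by measurable

lemma gauss_window_nonneg: "gauss_window \<sigma> \<xi> \<ge> 0"
  by (simp add: gauss_window_def gauss_damp_nonneg)

lemma gauss_kernel2_nonneg: "\<sigma> > 0 \<Longrightarrow> gauss_kernel2 \<sigma> z \<ge> 0"
  by (simp add: gauss_kernel2_def gauss_kernel_nonneg)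

lemma gauss_window_mono: "0 < s \<Longrightarrow> s \<le> t \<Longrightarrow> gauss_window s \<xi>
    \<le> gauss_window t \<xi>"
  unfolding gauss_window_def
  by (intro mult_mono gauss_damp_mono gauss_damp_nonneg) auto

lemma gauss_window_tendsto_1: "(\<lambda>j. gauss_window (real (Suc j)) \<xi>) \<longlonglongrightarrow> 1"
  using tendsto_mult[OF gauss_damp_tendsto_1 gauss_damp_tendsto_1]
  by (simp add: gauss_window_def)

lemma integrable_gauss_window: "\<sigma> > 0 \<Longrightarrow> integrable lborel (gauss_window \<sigma>)"
  using integrable_lborel_product[OF integrable_gauss_damp integrable_gauss_damp]
  by (simp add: gauss_window_def[abs_def] lborel_prod)

lemma gauss_kernel2_shift:
  assumes "\<sigma> > 0"
  shows "integrable lborel (\<lambda>y. gauss_kernel2 \<sigma> (x - y))"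
    and "(LINT y|lborel. gauss_kernel2 \<sigma> (x - y)) = 1"
proof -
  let ?g = "\<lambda>a t. gauss_kernel \<sigma> (a - t)"
  have e: "(\<lambda>y. gauss_kernel2 \<sigma> (x - y)) = (\<lambda>y. ?g (fst x) (fst y)
      * ?g (snd x) (snd y))"
    by (auto simp: gauss_kernel2_def)
  show "integrable lborel (\<lambda>y. gauss_kernel2 \<sigma> (x - y))"
    using integrable_lborel_product[OF gauss_kernel_shift(1)[OF assms] gauss_kernel_shift(1)[OF assms]]
    unfolding e by (simp add: lborel_prod)
  show "(LINT y|lborel. gauss_kernel2 \<sigma> (x - y)) = 1"
    using integral_pair_product[OF sigma_finite_lborel sigma_finite_lborel
        gauss_kernel_shift(1)[OF assms] gauss_kernel_shift(1)[OF assms]]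
    unfolding e by (simp add: lborel_prod gauss_kernel_shift(2)[OF assms])
qed

lemma fourier_gauss_window:
  assumes \<sigma>: "\<sigma> > 0"
  shows "(LINT \<xi>|lborel. complex_of_real (gauss_window \<sigma> \<xi>) * cis (2 * pi
      * (z \<bullet> \<xi>)))
    = complex_of_real (gauss_kernel2 \<sigma> z)"
proof -
  let ?F = "\<lambda>a t. complex_of_real (gauss_damp \<sigma> t) * cis (2 * pi * a * t)"
  have "cis (2 * pi * (z \<bullet> \<xi>)) = cis (2 * pi * fst z * fst \<xi>) * cis (2 * pi * snd z
      * snd \<xi>)" for \<xi>
    by (simp add: inner_prod_def cis_mult algebra_simps)
  then have e: "(\<lambda>\<xi>. complex_of_real (gauss_window \<sigma> \<xi>) * cis (2 * pi
      * (z \<bullet> \<xi>)))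
      = (\<lambda>\<xi>. ?F (fst z) (fst \<xi>) * ?F (snd z) (snd \<xi>))"
    by (simp add: gauss_window_def mult_ac)
  have "(LINT \<xi>|lborel. complex_of_real (gauss_window \<sigma> \<xi>) * cis (2 * pi
      * (z \<bullet> \<xi>)))
      = (LINT t|lborel. ?F (fst z) t) * (LINT t|lborel. ?F (snd z) t)"
    unfolding e lborel_prod[symmetric]
    by (rule integral_pair_product[OF sigma_finite_lborel sigma_finite_lborel
          integrable_gauss_damp_cis[OF \<sigma>] integrable_gauss_damp_cis[OF \<sigma>]])
  also have "\<dots> = complex_of_real (gauss_kernel2 \<sigma> z)"
    by (simp add: fourier_gauss_damp[OF \<sigma>] gauss_kernel2_def)
  finally show ?thesis .
qed

section \<open>Fourier transforms of bounded functions of compact support\<close>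

definition fourier2 :: "(real \<times> real \<Rightarrow> real) \<Rightarrow> real \<times> real
    \<Rightarrow> complex" where
  "fourier2 b \<xi> = (LINT x|lborel. complex_of_real (b x) * cis (2 * pi * (x \<bullet> \<xi>)))"

lemma fourier2_uminus: "fourier2 b (- \<xi>) = cnj (fourier2 b \<xi>)"
  unfolding fourier2_def Bochner_Integration.integral_cnj[symmetric] by (simp add: cis_cnj)

locale bounded_support =
  fixes b :: "real \<times> real \<Rightarrow> real" and B R :: real
  assumes measurable_b [measurable]: "b \<in> borel_measurable borel"
    and abs_le_bound: "\<And>x. \<bar>b x\<bar> \<le> B"
    and outside_ball: "\<And>x. x \<notin> ball 0 R \<Longrightarrow> b x = 0"
begin

definition "l1_norm = (LINT x|lborel. \<bar>b x\<bar>)"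

lemma bound_nonneg: "B \<ge> 0"
  using abs_le_bound[of 0] by simp

lemma integrable_b: "integrable lborel b"
  by (rule integrable_bounded_ball_support[where M=B and r=R]) (use abs_le_bound outside_ball in auto)

lemma integrable_abs_b: "integrable lborel (\<lambda>x. \<bar>b x\<bar>)"
  using integrable_b by simp

lemma integrable_b_cis: "integrable lborel (\<lambda>x. complex_of_real (b x) * cis (c
    * (x \<bullet> \<xi>)))"
  by (rule Bochner_Integration.integrable_bound[OF integrable_abs_b]) (auto simp: norm_mult)

lemma measurable_fourier2 [measurable]: "fourier2 b \<in> borel_measurable borel"
  unfolding fourier2_def by measurable

lemma norm_fourier2_le: "norm (fourier2 b \<xi>) \<le> l1_norm"
proof -
  have "norm (fourier2 b \<xi>) \<le> (LINT x|lborel. norm (complex_of_real (b x) * cis (2 * pi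
      * (x \<bullet> \<xi>))))"
    unfolding fourier2_def by (rule integral_norm_bound)
  also have "\<dots> = l1_norm" by (simp add: l1_norm_def norm_mult)
  finally show ?thesis .
qed

lemma fourier2_translate:
  "(LINT f|lborel. complex_of_real (b (\<rho> + f)) * cis (2 * pi * (f \<bullet> r)))
    = cis (- (2 * pi * (\<rho> \<bullet> r))) * fourier2 b r"
proof -
  have "(LINT f|lborel. complex_of_real (b (\<rho> + f)) * cis (2 * pi * (f \<bullet> r)))
      = (LINT x|lborel. complex_of_real (b x) * cis (2 * pi * ((x - \<rho>) \<bullet> r)))"
    using integral_lborel_translate[of "\<lambda>x. complex_of_real (b x) * cis (2 * pi
        * ((x - \<rho>) \<bullet> r))" \<rho>]
    by simp
  also have "\<dots> = (LINT x|lborel. cis (- (2 * pi * (\<rho> \<bullet> r)))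
      * (complex_of_real (b x) * cis (2 * pi * (x \<bullet> r))))"
    by (intro Bochner_Integration.integral_cong refl) (simp add: inner_diff_left cis_mult algebra_simps)
  finally show ?thesis unfolding fourier2_def by simp
qed

text \<open>Plancherel's bound \<open>\<integral> \<bar>\<hat>b\<bar>\<^sup>2
    \<le> B \<integral> \<bar>b\<bar>\<close>, obtained
    by testing \<open>\<bar>\<hat>b\<bar>\<^sup>2\<close> against Gaussian windows: the
  windowed integral is the quadratic form of \<open>b\<close> against a Gaussian kernel of unit mass, and
  monotone convergence removes the window.\<close>

lemma norm_fourier2_square:
  "complex_of_real ((norm (fourier2 b \<xi>))\<^sup>2) =
   (LINT p|(lborel \<Otimes>\<^sub>M lborel). complex_of_real (b (fst p) * b (snd p)) * cis (2 * pi
       * ((fst p - snd p) \<bullet> \<xi>)))"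
proof -
  have "complex_of_real ((norm (fourier2 b \<xi>))\<^sup>2) = fourier2 b \<xi> * fourier2 b (- \<xi>)"
    unfolding fourier2_uminus by (rule complex_norm_square)
  also have "\<dots> = (LINT p|(lborel \<Otimes>\<^sub>M lborel). (complex_of_real (b (fst p))
      * cis (2 * pi * (fst p \<bullet> \<xi>)))
      * (complex_of_real (b (snd p)) * cis (2 * pi * (snd p \<bullet> - \<xi>))))"
    unfolding fourier2_def
    by (rule integral_pair_product[OF sigma_finite_lborel sigma_finite_lborel integrable_b_cis
        integrable_b_cis, symmetric])
  also have "\<dots> = (LINT p|(lborel \<Otimes>\<^sub>M lborel). complex_of_real (b (fst p)
      * b (snd p)) * cis (2 * pi * ((fst p - snd p) \<bullet> \<xi>)))"
  proof (intro Bochner_Integration.integral_cong refl)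
    fix p :: "(real \<times> real) \<times> (real \<times> real)"
    have "cis (2 * pi * (fst p \<bullet> \<xi>)) * cis (2 * pi * (snd p \<bullet> - \<xi>))
        = cis (2 * pi * ((fst p - snd p) \<bullet> \<xi>))"
      by (simp add: cis_mult inner_diff_left algebra_simps)
    then show "(complex_of_real (b (fst p)) * cis (2 * pi * (fst p \<bullet> \<xi>)))
        * (complex_of_real (b (snd p)) * cis (2 * pi * (snd p \<bullet> - \<xi>)))
      = complex_of_real (b (fst p) * b (snd p)) * cis (2 * pi * ((fst p - snd p) \<bullet> \<xi>))"
      by (simp add: algebra_simps)
  qed
  finally show ?thesis .
qed

lemma integrable_gauss_kernel2_majorant:
  assumes \<sigma>: "\<sigma> > 0"
  shows "integrable (lborel \<Otimes>\<^sub>M lborel) (\<lambda>p. \<bar>b (fst p)\<bar>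
      * gauss_kernel2 \<sigma> (fst p - snd p))"
    and "(LINT p|(lborel \<Otimes>\<^sub>M lborel). \<bar>b (fst p)\<bar>
        * gauss_kernel2 \<sigma> (fst p - snd p)) = l1_norm"
proof -
  let ?g = "\<lambda>p. \<bar>b (fst p)\<bar> * gauss_kernel2 \<sigma> (fst p - snd p)"
  note inner = gauss_kernel2_shift(2)[OF \<sigma>]
  show int: "integrable (lborel \<Otimes>\<^sub>M lborel) ?g"
  proof (rule lborel_pair.Fubini_integrable)
    show "?g \<in> borel_measurable (lborel \<Otimes>\<^sub>M lborel)" by measurable
    have "(LINT y|lborel. norm (?g (x, y))) = (LINT y|lborel. ?g (x, y))" for x
      by (intro Bochner_Integration.integral_cong refl) (simp add: abs_mult gauss_kernel2_nonneg[OF \<sigma>])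
    then show "integrable lborel (\<lambda>x. LINT y|lborel. norm (?g (x, y)))"
      using integrable_abs_b by (simp add: inner)
    show "AE x in lborel. integrable lborel (\<lambda>y. ?g (x, y))"
      by (intro AE_I2 integrable_mult_right) (simp add: gauss_kernel2_shift(1)[OF \<sigma>])
  qed
  show "(LINT p|(lborel \<Otimes>\<^sub>M lborel). ?g p) = l1_norm"
    using lborel_pair.integral_fst[of "\<lambda>x y. ?g (x, y)"] int
    by (simp add: inner l1_norm_def case_prod_beta')
qed

lemma gauss_kernel2_quadratic_form_le:
  assumes \<sigma>: "\<sigma> > 0"
  shows "(LINT p|(lborel \<Otimes>\<^sub>M lborel). b (fst p) * b (snd p)
      * gauss_kernel2 \<sigma> (fst p - snd p)) \<le> B * l1_norm"
proof -
  let ?g = "\<lambda>p. \<bar>b (fst p)\<bar> * gauss_kernel2 \<sigma> (fst p - snd p)"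
  note g = integrable_gauss_kernel2_majorant[OF \<sigma>]
  have le: "\<bar>b (fst p) * b (snd p) * gauss_kernel2 \<sigma> (fst p - snd p)\<bar> \<le> B * ?g p" for p
  proof -
    have "\<bar>b (fst p) * b (snd p) * gauss_kernel2 \<sigma> (fst p - snd p)\<bar>
        = \<bar>b (fst p)\<bar> * \<bar>b (snd p)\<bar> * gauss_kernel2 \<sigma> (fst p - snd p)"
      by (simp add: abs_mult gauss_kernel2_nonneg[OF \<sigma>])
    also have "\<dots> \<le> \<bar>b (fst p)\<bar> * B * gauss_kernel2 \<sigma> (fst p - snd p)"
      using abs_le_bound gauss_kernel2_nonneg[OF \<sigma>] by (intro mult_right_mono mult_left_mono) auto
    finally show ?thesis by (simp only: mult_ac)
  qed
  have int: "integrable (lborel \<Otimes>\<^sub>M lborel) (\<lambda>p. b (fst p) * b (snd p)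
      * gauss_kernel2 \<sigma> (fst p - snd p))"
    by (rule Bochner_Integration.integrable_bound[OF integrable_mult_right[OF g(1), of B]])
       (use le bound_nonneg gauss_kernel2_nonneg[OF \<sigma>] in \<open>auto simp: abs_mult\<close>)
  have "(LINT p|(lborel \<Otimes>\<^sub>M lborel). b (fst p) * b (snd p)
      * gauss_kernel2 \<sigma> (fst p - snd p))
      \<le> (LINT p|(lborel \<Otimes>\<^sub>M lborel). B * ?g p)"
    by (rule Bochner_Integration.integral_mono[OF int integrable_mult_right[OF g(1)]])
       (use le abs_le_D1 in blast)
  also have "\<dots> = B * l1_norm" by (simp add: g(2))
  finally show ?thesis .
qed

lemma windowed_norm_fourier2_square_eq:
  assumes \<sigma>: "\<sigma> > 0"
  shows "(LINT \<xi>|lborel. gauss_window \<sigma> \<xi> * (norm (fourier2 b \<xi>))\<^sup>2) =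
     (LINT p|(lborel \<Otimes>\<^sub>M lborel). b (fst p) * b (snd p)
         * gauss_kernel2 \<sigma> (fst p - snd p))"
proof -
  interpret P: pair_sigma_finite lborel "lborel \<Otimes>\<^sub>M lborel :: ((real \<times> real)
      \<times> (real \<times> real)) measure"
    by (simp add: pair_sigma_finite_def sigma_finite_lborel sigma_finite_pair_measure)
  define F where "F \<xi> p = complex_of_real (b (fst p) * b (snd p))
      * (complex_of_real (gauss_window \<sigma> \<xi>) * cis (2 * pi
          * ((fst p - snd p) \<bullet> (\<xi>::real \<times> real))))"
    for \<xi> p
  have "integrable (lborel \<Otimes>\<^sub>M (lborel \<Otimes>\<^sub>M lborel)) (\<lambda>x. F (fst
      x) (snd x))"
  proof (rule Bochner_Integration.integrable_bound)
    show "integrable (lborel \<Otimes>\<^sub>M (lborel \<Otimes>\<^sub>M lborel))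
        (\<lambda>x. gauss_window \<sigma> (fst x) * (\<bar>b (fst (snd x))\<bar>
            * \<bar>b (snd (snd x))\<bar>))"
      by (intro integrable_pair_product sigma_finite_lborel sigma_finite_pair_measure
          integrable_gauss_window[OF \<sigma>] integrable_lborel_product integrable_abs_b)
    show "(\<lambda>x. F (fst x) (snd x)) \<in> borel_measurable (lborel \<Otimes>\<^sub>M (lborel
        \<Otimes>\<^sub>M lborel))"
      unfolding F_def by measurable
  qed (simp add: F_def norm_mult abs_mult gauss_window_nonneg)
  then have "(LINT \<xi>|lborel. LINT p|(lborel \<Otimes>\<^sub>M lborel). F \<xi> p) =
      (LINT p|(lborel \<Otimes>\<^sub>M lborel). LINT \<xi>|lborel. F \<xi> p)"
    by (intro P.Fubini_integral[symmetric]) (simp add: case_prod_beta')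
  moreover have "(LINT p|(lborel \<Otimes>\<^sub>M lborel). F \<xi> p)
      = complex_of_real (gauss_window \<sigma> \<xi> * (norm (fourier2 b \<xi>))\<^sup>2)" for \<xi>
    unfolding F_def of_real_mult[of "gauss_window \<sigma> \<xi>"] norm_fourier2_square
    by (simp add: mult_ac)
  moreover have "(LINT \<xi>|lborel. F \<xi> p) = complex_of_real (b (fst p) * b (snd p)
      * gauss_kernel2 \<sigma> (fst p - snd p))" for p
    by (simp add: F_def fourier_gauss_window[OF \<sigma>])
  ultimately have "(LINT \<xi>|lborel. complex_of_real (gauss_window \<sigma> \<xi>
      * (norm (fourier2 b \<xi>))\<^sup>2))
      = (LINT p|(lborel \<Otimes>\<^sub>M lborel). complex_of_real (b (fst p) * b (snd p)
          * gauss_kernel2 \<sigma> (fst p - snd p)))"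
    by (simp only:)
  then show ?thesis unfolding integral_complex_of_real of_real_eq_iff .
qed

lemma integrable_windowed_norm_fourier2_square:
  assumes \<sigma>: "\<sigma> > 0"
  shows "integrable lborel (\<lambda>\<xi>. gauss_window \<sigma> \<xi> * (norm (fourier2 b \<xi>))\<^sup>2)"
proof (rule Bochner_Integration.integrable_bound[OF integrable_mult_left[OF
    integrable_gauss_window[OF \<sigma>], of "l1_norm\<^sup>2"]])
  show "(\<lambda>\<xi>. gauss_window \<sigma> \<xi>
      * (norm (fourier2 b \<xi>))\<^sup>2) \<in> borel_measurable lborel" by measurable
  have "(norm (fourier2 b x))\<^sup>2 \<le> l1_norm\<^sup>2" for x
    by (intro power_mono norm_fourier2_le) auto
  then show "AE x in lborel. norm (gauss_window \<sigma> x * (norm (fourier2 b x))\<^sup>2)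
      \<le> norm (gauss_window \<sigma> x * l1_norm\<^sup>2)"
    by (intro AE_I2) (simp add: abs_mult gauss_window_nonneg mult_left_mono)
qed

lemma square_integrable_fourier2: "integrable lborel (\<lambda>\<xi>. (norm (fourier2 b \<xi>))\<^sup>2)"
proof -
  let ?S = "\<lambda>\<xi>. (norm (fourier2 b \<xi>))\<^sup>2"
  let ?f = "\<lambda>j \<xi>. ennreal (gauss_window (real (Suc j)) \<xi> * ?S \<xi>)"
  have inc: "incseq ?f"
    by (intro incseq_SucI le_funI ennreal_leI mult_right_mono gauss_window_mono) auto
  have "(SUP j. ?f j \<xi>) = ennreal (?S \<xi>)" for \<xi>
  proof -
    have "(\<lambda>j. ?f j \<xi>) \<longlonglongrightarrow> (SUP j. ?f j \<xi>)"
      by (rule LIMSEQ_SUP) (intro incseq_SucI ennreal_leI mult_right_mono gauss_window_mono, auto)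
    moreover have "(\<lambda>j. ?f j \<xi>) \<longlonglongrightarrow> ennreal (1 * ?S \<xi>)"
      by (intro tendsto_ennrealI tendsto_mult gauss_window_tendsto_1 tendsto_const)
    ultimately show ?thesis using LIMSEQ_unique by fastforce
  qed
  then have "(\<integral>\<^sup>+\<xi>. ennreal (?S \<xi>) \<partial>lborel)
      = (SUP j. \<integral>\<^sup>+\<xi>. ?f j \<xi> \<partial>lborel)"
    using nn_integral_monotone_convergence_SUP[OF inc] by simp
  also have "\<dots> \<le> ennreal (B * l1_norm)"
  proof (rule SUP_least)
    fix j
    have "(\<integral>\<^sup>+\<xi>. ?f j \<xi> \<partial>lborel) = ennreal
        (LINT \<xi>|lborel. gauss_window (real (Suc j)) \<xi> * ?S \<xi>)"
      by (rule nn_integral_eq_integral[OF integrable_windowed_norm_fourier2_square])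
         (auto simp: gauss_window_nonneg)
    also have "\<dots> \<le> ennreal (B * l1_norm)"
      by (intro ennreal_leI)
         (simp add: windowed_norm_fourier2_square_eq gauss_kernel2_quadratic_form_le del: of_nat_Suc)
    finally show "(\<integral>\<^sup>+\<xi>. ?f j \<xi> \<partial>lborel) \<le> ennreal (B * l1_norm)" .
  qed
  also have "\<dots> < \<infinity>" by simp
  finally show ?thesis
    by (intro integrableI_nonneg) auto
qed

end

lemma integrable_cross_correlation_integrand:
  assumes a: "bounded_support a Ba Ra" and b: "bounded_support b Bb Rb"
  shows "integrable (lborel \<Otimes>\<^sub>M lborel)
    (\<lambda>(f, \<rho>). complex_of_real (a \<rho> * b (\<rho> + f)) * cis (2 * pi * (f \<bullet> r)))"
proof -
  interpret a: bounded_support a Ba Ra by (rule a)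
  interpret b: bounded_support b Bb Rb by (rule b)
  define F where "F f \<rho> = complex_of_real (a \<rho> * b (\<rho> + f)) * cis (2 * pi
      * (f \<bullet> r))" for f \<rho>
  have F_le: "norm (F f \<rho>) \<le> Bb * indicator (ball 0 (Ra + Rb)) f
      * \<bar>a \<rho>\<bar>" for f \<rho> :: "real \<times> real"
  proof (cases "a \<rho> \<noteq> 0 \<and> b (\<rho> + f) \<noteq> 0")
    case True
    then have "norm \<rho> < Ra" "norm (\<rho> + f) < Rb"
      using a.outside_ball[of \<rho>] b.outside_ball[of "\<rho> + f"] by auto
    then have "norm f < Ra + Rb"
      using norm_triangle_ineq4[of "\<rho> + f" \<rho>] by simp
    then show ?thesis
      using mult_left_mono[OF b.abs_le_bound[of "\<rho> + f"] abs_ge_zero[of "a \<rho>"]]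
      by (simp add: F_def norm_mult abs_mult mult.commute)
  qed (auto simp: F_def b.bound_nonneg)
  have "integrable (lborel \<Otimes>\<^sub>M lborel) (case_prod F)"
  proof (rule Bochner_Integration.integrable_bound)
    show "integrable (lborel \<Otimes>\<^sub>M lborel) (\<lambda>x. Bb * indicator (ball 0 (Ra
        + Rb)) (fst x) * \<bar>a (snd x)\<bar>)"
      by (intro integrable_pair_product sigma_finite_lborel integrable_mult_right integrable_real_indicator
          a.integrable_abs_b) (use emeasure_lborel_ball_finite in auto)
    show "case_prod F \<in> borel_measurable (lborel \<Otimes>\<^sub>M lborel)" unfolding F_def by measurable
  qed (use F_le b.bound_nonneg in \<open>auto simp: abs_mult\<close>)
  then show ?thesis by (simp add: F_def[abs_def])
qed

lemma fourier2_cross_correlation: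
  assumes a: "bounded_support a Ba Ra" and b: "bounded_support b Bb Rb"
  shows "integrable lborel (\<lambda>f. complex_of_real (LINT \<rho>|lborel. a \<rho> * b (\<rho>
      + f)) * cis (2 * pi * (f \<bullet> r)))"
    and "(LINT f|lborel. complex_of_real (LINT \<rho>|lborel. a \<rho> * b (\<rho> + f)) * cis (2
        * pi * (f \<bullet> r)))
      = fourier2 a (- r) * fourier2 b r"
proof -
  interpret b: bounded_support b Bb Rb by (rule b)
  define F where "F f \<rho> = complex_of_real (a \<rho> * b (\<rho> + f)) * cis (2 * pi
      * (f \<bullet> r))" for f \<rho>
  have int: "integrable (lborel \<Otimes>\<^sub>M lborel) (case_prod F)"
    unfolding F_def[abs_def] by (rule integrable_cross_correlation_integrand[OF a b])
  have inner: "complex_of_real (LINT \<rho>|lborel. a \<rho> * b (\<rho> + f)) * cis (2 * pi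
      * (f \<bullet> r))
      = (LINT \<rho>|lborel. F f \<rho>)" for f
    by (simp add: F_def integral_complex_of_real[symmetric])
  show "integrable lborel (\<lambda>f. complex_of_real (LINT \<rho>|lborel. a \<rho> * b (\<rho>
      + f)) * cis (2 * pi * (f \<bullet> r)))"
    unfolding inner using lborel_pair.integrable_fst'[OF int] by simp
  have "(LINT f|lborel. complex_of_real (LINT \<rho>|lborel. a \<rho> * b (\<rho> + f)) * cis (2
      * pi * (f \<bullet> r)))
      = (LINT f|lborel. LINT \<rho>|lborel. F f \<rho>)"
    unfolding inner ..
  also have "\<dots> = (LINT \<rho>|lborel. LINT f|lborel. F f \<rho>)"
    by (rule lborel_pair.Fubini_integral[OF int, symmetric])
  also have "\<dots> = (LINT \<rho>|lborel. fourier2 b r * (complex_of_real (a \<rho>) * cis (2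
      * pi * (\<rho> \<bullet> - r))))"
  proof (intro Bochner_Integration.integral_cong refl)
    fix \<rho> :: "real \<times> real"
    have "(LINT f|lborel. F f \<rho>)
        = complex_of_real (a \<rho>) * (LINT f|lborel. complex_of_real (b (\<rho> + f)) * cis (2
            * pi * (f \<bullet> r)))"
      unfolding F_def by (simp add: mult.assoc)
    then show "(LINT f|lborel. F f \<rho>) = fourier2 b r * (complex_of_real (a \<rho>) * cis (2
        * pi * (\<rho> \<bullet> - r)))"
      by (simp add: b.fourier2_translate)
  qed
  also have "\<dots> = fourier2 a (- r) * fourier2 b r"
    by (simp add: fourier2_def)
  finally show "(LINT f|lborel. complex_of_real (LINT \<rho>|lborel. a \<rho> * b (\<rho> + f))
      * cis (2 * pi * (f \<bullet> r)))
      = fourier2 a (- r) * fourier2 b r" .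
qed

section \<open>The transfer function of half-disk illumination\<close>

locale half_disk_illumination =
  fixes lam NA A \<theta> :: real and q :: "real \<times> real \<Rightarrow> real"
  assumes lam_pos: "lam > 0" and NA_pos: "NA > 0" and A_pos: "A > 0"
    and q_nonneg: "\<And>\<rho>. q \<rho> \<ge> 0"
    and q_measurable: "q \<in> borel_measurable lborel"
    and q_bounded: "\<exists>B. \<forall>\<rho>. q \<rho> \<le> B"
    and q_support: "\<And>\<rho>. \<rho> \<notin> half_disk lam NA \<theta> \<Longrightarrow> q \<rho> = 0"
begin

definition "cutoff = NA / lam"

definition "pupil_re x = (if norm x < cutoff then 1 else (0::real))"

definition "qmax = (SOME B. \<forall>\<rho>. q \<rho> \<le> B)"

definition "corr f = (LINT \<rho>|lborel. q \<rho> * (pupil_re (\<rho> + f) - pupil_re (\<rho> - f)))"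

lemma q_le_qmax: "q \<rho> \<le> qmax"
  using someI_ex[OF q_bounded] unfolding qmax_def by blast

lemma measurable_q [measurable]: "q \<in> borel_measurable borel"
  using q_measurable by simp

lemma measurable_pupil_re [measurable]: "pupil_re \<in> borel_measurable borel"
  unfolding pupil_re_def by measurable

lemma pupil_eq_pupil_re: "pupil lam NA x = complex_of_real (pupil_re x)"
  by (simp add: pupil_def pupil_re_def cutoff_def)

lemma mem_half_disk_imp:
  assumes "\<rho> \<in> half_disk lam NA \<theta>"
  shows "norm \<rho> < cutoff" "\<rho> \<bullet> dir \<theta> \<ge> 0"
proof -
  from assms obtain r \<phi> where \<rho>: "\<rho> = (r * cos \<phi>, r * sin \<phi>)" and r: "0
      \<le> r" "r < cutoff"
      and \<phi>: "\<theta> - pi/2 \<le> \<phi>" "\<phi> \<le> \<theta> + pi/2"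
    unfolding half_disk_def cutoff_def by blast
  have "norm \<rho> = sqrt ((r * cos \<phi>)\<^sup>2 + (r * sin \<phi>)\<^sup>2)"
    by (simp add: \<rho> norm_prod_def)
  also have "(r * cos \<phi>)\<^sup>2 + (r * sin \<phi>)\<^sup>2 = r\<^sup>2"
    by (simp add: power_mult_distrib distrib_left[symmetric])
  finally show "norm \<rho> < cutoff" using r by simp
  have "\<rho> \<bullet> dir \<theta> = r * cos (\<phi> - \<theta>)"
    by (simp add: \<rho> dir_def inner_prod_def cos_diff algebra_simps)
  also have "\<dots> \<ge> 0" using r \<phi> by (intro mult_nonneg_nonneg cos_ge_zero) auto
  finally show "\<rho> \<bullet> dir \<theta> \<ge> 0" .
qed

lemma q_nonzero_imp:
  assumes "q \<rho> \<noteq> 0"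
  shows "norm \<rho> < cutoff" "\<rho> \<bullet> dir \<theta> \<ge> 0"
  using mem_half_disk_imp q_support assms by blast+

sublocale q: bounded_support q qmax cutoff
  by unfold_locales (use q_nonneg q_le_qmax q_nonzero_imp(1) in force)+

sublocale pupil: bounded_support pupil_re 1 cutoff
  by unfold_locales (auto simp: pupil_re_def)

lemma abs_corr_integrand_le: "\<bar>q \<rho> * (pupil_re (\<rho>
    + f) - pupil_re (\<rho> - f))\<bar> \<le> q \<rho>"
  using q_nonneg[of \<rho>] by (auto simp: pupil_re_def abs_mult)

lemma integrable_corr_integrand:
  "integrable lborel (\<lambda>\<rho>. q \<rho> * (pupil_re (\<rho> + f) - pupil_re (\<rho> - f)))"
  by (rule Bochner_Integration.integrable_bound[OF q.integrable_b])
     (use abs_corr_integrand_le q_nonneg in auto)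

lemma Htilde_eq_corr: "Htilde A lam NA q f = \<i> * complex_of_real A * complex_of_real (corr f)"
proof -
  have "(\<lambda>\<rho>. complex_of_real (q \<rho>) * cnj (pupil lam NA \<rho>)
      * (pupil lam NA (\<rho> + f) - pupil lam NA (\<rho> - f)))
      = (\<lambda>\<rho>. complex_of_real (q \<rho> * (pupil_re (\<rho> + f) - pupil_re (\<rho> - f))))"
  proof
    fix \<rho>
    show "complex_of_real (q \<rho>) * cnj (pupil lam NA \<rho>) * (pupil lam NA (\<rho>
        + f) - pupil lam NA (\<rho> - f))
        = complex_of_real (q \<rho> * (pupil_re (\<rho> + f) - pupil_re (\<rho> - f)))"
      using q_nonzero_imp(1)[of \<rho>] by (cases "q \<rho> = 0") (auto simp: pupil_eq_pupil_re pupil_re_def)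
  qed
  then show ?thesis unfolding Htilde_def corr_def integral_complex_of_real[symmetric] by (simp only:)
qed

definition "corr_bound = q.l1_norm"

lemma abs_corr_le: "\<bar>corr f\<bar> \<le> corr_bound"
proof -
  have "\<bar>corr f\<bar> \<le> (LINT \<rho>|lborel. norm (q \<rho> * (pupil_re (\<rho>
      + f) - pupil_re (\<rho> - f))))"
    unfolding corr_def
    using integral_norm_bound[of lborel "\<lambda>\<rho>. q \<rho> * (pupil_re (\<rho>
        + f) - pupil_re (\<rho> - f))"]
    by simp
  also have "\<dots> \<le> corr_bound"
    unfolding corr_bound_def q.l1_norm_def
    by (intro Bochner_Integration.integral_mono integrable_norm integrable_corr_integrand q.integrable_abs_b)
       (simp add: order_trans[OF abs_corr_integrand_le])
  finally show ?thesis .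
qed

lemma corr_bound_nonneg: "corr_bound \<ge> 0"
  using abs_corr_le[of 0] by simp

lemma corr_eq_0_outside:
  assumes "norm f \<ge> 2 * cutoff"
  shows "corr f = 0"
proof -
  have "q \<rho> * (pupil_re (\<rho> + f) - pupil_re (\<rho> - f)) = 0" for \<rho>
  proof (cases "q \<rho> = 0")
    case False
    then have r: "norm \<rho> < cutoff" by (rule q_nonzero_imp)
    have "norm f \<le> norm (\<rho> + f) + norm \<rho>" "norm f \<le> norm (\<rho> - f) + norm \<rho>"
      using norm_triangle_ineq4[of "\<rho> + f" \<rho>] norm_triangle_ineq4[of \<rho> "\<rho> - f"]
      by simp_all
    then have "pupil_re (\<rho> + f) = 0" "pupil_re (\<rho> - f) = 0"
      using r assms by (auto simp: pupil_re_def)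
    then show ?thesis by simp
  qed simp
  then have "(\<lambda>\<rho>. q \<rho> * (pupil_re (\<rho> + f) - pupil_re (\<rho> - f)))
      = (\<lambda>_. 0)" by (rule ext)
  then show ?thesis unfolding corr_def by simp
qed

lemma corr_uminus: "corr (- f) = - corr f"
proof -
  have "corr (- f) = (LINT \<rho>|lborel. - (q \<rho> * (pupil_re (\<rho> + f) - pupil_re (\<rho> - f))))"
    unfolding corr_def by (intro Bochner_Integration.integral_cong) (auto simp: algebra_simps)
  then show ?thesis by (simp add: corr_def)
qed

text \<open>The only place where the half-disk support of \<open>q\<close> enters: for
    \<open>\<rho> \<bullet> dir \<theta> \<ge> 0\<close> and
  \<open>k \<ge> 0\<close> the point \<open>\<rho> - k dir \<theta>\<close> is at least as close to
      the origin as \<open>\<rho> + k dir \<theta>\<close>.\<close>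
lemma corr_dir_nonpos:
  assumes "k \<ge> 0"
  shows "corr (k *\<^sub>R dir \<theta>) \<le> 0"
proof -
  have "q \<rho> * (pupil_re (\<rho> + k *\<^sub>R dir \<theta>) - pupil_re (\<rho> - k *\<^sub>R
      dir \<theta>)) \<le> 0" for \<rho>
  proof (cases "q \<rho> = 0")
    case False
    then have "\<rho> \<bullet> dir \<theta> \<ge> 0" by (rule q_nonzero_imp)
    then have "(norm (\<rho> - k *\<^sub>R dir \<theta>))\<^sup>2 \<le> (norm (\<rho>
        + k *\<^sub>R dir \<theta>))\<^sup>2"
      using assms by (simp add: power2_norm_eq_inner inner_add_left inner_add_right
          inner_diff_left inner_diff_right inner_commute)
    then have "norm (\<rho> - k *\<^sub>R dir \<theta>) \<le> norm (\<rho> + k *\<^sub>R dir \<theta>)"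
      by (simp add: power_mono_iff)
    then have "pupil_re (\<rho> + k *\<^sub>R dir \<theta>)
        \<le> pupil_re (\<rho> - k *\<^sub>R dir \<theta>)"
      by (auto simp: pupil_re_def)
    then show ?thesis using q_nonneg[of \<rho>] by (simp add: mult_nonneg_nonpos)
  qed simp
  then have "0 \<le> (LINT \<rho>|lborel. - (q \<rho> * (pupil_re (\<rho>
      + k *\<^sub>R dir \<theta>) - pupil_re (\<rho> - k *\<^sub>R dir \<theta>))))"
    by (intro integral_nonneg_AE AE_I2) (simp add: le_minus_iff)
  then show ?thesis unfolding corr_def by simp
qed

lemma pupil_re_tendsto:
  assumes "norm y \<noteq> cutoff" and Y: "Y \<longlonglongrightarrow> y"
  shows "(\<lambda>n. pupil_re (Y n)) \<longlonglongrightarrow> pupil_re y"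
proof -
  have N: "(\<lambda>n. norm (Y n)) \<longlonglongrightarrow> norm y" using Y by (rule tendsto_norm)
  have "eventually (\<lambda>n. norm (Y n) < cutoff \<longleftrightarrow> norm y < cutoff) sequentially"
  proof (cases "norm y < cutoff")
    case True
    then show ?thesis using order_tendstoD(2)[OF N True] True by (auto elim: eventually_mono)
  next
    case False
    then have "norm y > cutoff" using assms by simp
    then show ?thesis using order_tendstoD(1)[OF N, of cutoff] False by (auto elim: eventually_mono)
  qed
  then have "eventually (\<lambda>n. pupil_re (Y n) = pupil_re y) sequentially"
    by eventually_elim (simp add: pupil_re_def)
  then show ?thesis by (rule tendsto_eventually)
qed

text \<open>Continuity by dominated convergence: the integrand converges off the two circles
  \<open>\<bar>\<rho> \<plusminus> f\<bar> = cutoff\<close>, a null set.\<close>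
lemma isCont_corr: "isCont corr f"
proof (rule continuous_at_sequentiallyI)
  fix u assume u: "u \<longlonglongrightarrow> f"
  have "sphere c cutoff \<in> null_sets lborel" for c :: "real \<times> real"
    using negligible_sphere[of c cutoff]
    by (auto simp: null_sets_completion_iff negligible_iff_null_sets negligible_convex_frontier)
  then have null: "sphere (- f) cutoff \<union> sphere f cutoff \<in> null_sets lborel"
    by (intro null_sets.Un)
  show "(\<lambda>n. corr (u n)) \<longlonglongrightarrow> corr f" unfolding corr_def
  proof (rule integral_dominated_convergence[where w=q])
    show "integrable lborel q" by (rule q.integrable_b)
    show "(\<lambda>\<rho>. q \<rho> * (pupil_re (\<rho>
        + f) - pupil_re (\<rho> - f))) \<in> borel_measurable lborel"
      "(\<lambda>\<rho>. q \<rho> * (pupil_re (\<rho>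
          + u i) - pupil_re (\<rho> - u i))) \<in> borel_measurable lborel" for i
      by measurable
    show "AE x in lborel. norm (q x * (pupil_re (x + u i) - pupil_re (x - u i))) \<le> q x" for i
      using abs_corr_integrand_le by simp
    show "AE x in lborel. (\<lambda>i. q x * (pupil_re (x + u i) - pupil_re (x - u i)))
        \<longlonglongrightarrow> q x * (pupil_re (x + f) - pupil_re (x - f))"
    proof (rule AE_I'[OF null])
      show "{x \<in> space lborel. \<not> (\<lambda>i. q x * (pupil_re (x + u i) - pupil_re (x - u i)))
          \<longlonglongrightarrow> q x * (pupil_re (x
              + f) - pupil_re (x - f))} \<subseteq> sphere (- f) cutoff \<union> sphere f cutoff"
      proof (rule subsetI, rule ccontr)
        fix x assume "x \<notin> sphere (- f) cutoff \<union> sphere f cutoff"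
        then have "norm (x + f) \<noteq> cutoff" "norm (x - f) \<noteq> cutoff"
          by (auto simp: dist_norm norm_minus_commute simp flip: diff_minus_eq_add)
        have "(\<lambda>i. pupil_re (x + u i)) \<longlonglongrightarrow> pupil_re (x + f)"
          by (rule pupil_re_tendsto[OF \<open>norm (x
              + f) \<noteq> cutoff\<close>]) (intro tendsto_add tendsto_const u)
        moreover have "(\<lambda>i. pupil_re (x - u i)) \<longlonglongrightarrow> pupil_re (x - f)"
          by (rule pupil_re_tendsto[OF \<open>norm (x - f) \<noteq> cutoff\<close>]) (intro
              tendsto_diff tendsto_const u)
        ultimately have "(\<lambda>i. q x * (pupil_re (x + u i) - pupil_re (x - u i)))
            \<longlonglongrightarrow> q x * (pupil_re (x + f) - pupil_re (x - f))"
          by (intro tendsto_mult tendsto_diff tendsto_const)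
        moreover assume "x \<in> {x \<in> space lborel. \<not> (\<lambda>i. q x * (pupil_re (x
            + u i) - pupil_re (x - u i)))
          \<longlonglongrightarrow> q x * (pupil_re (x + f) - pupil_re (x - f))}"
        ultimately show False by simp
      qed
    qed
  qed
qed

lemma measurable_corr [measurable]: "corr \<in> borel_measurable borel"
  by (rule borel_measurable_continuous_onI) (simp add: continuous_at_imp_continuous_on isCont_corr)

lemma integrable_corr: "integrable lborel corr"
  by (rule integrable_bounded_ball_support[where M=corr_bound and r="2 * cutoff"])
     (use abs_corr_le corr_eq_0_outside in auto)

end

section \<open>The impulse response and the edge response\<close>

context half_disk_illumination
begin

definition "H = inv_FT2 (Htilde A lam NA q)"

lemma H_eq_fourier:
  "H r = \<i> * complex_of_real A
    * (fourier2 q (- r) * fourier2 pupil_re r - fourier2 q r * fourier2 pupil_re (- r))"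
proof -
  define c where "c f = (LINT \<rho>|lborel. q \<rho> * pupil_re (\<rho> + f))" for f
  define C where "C s f = complex_of_real (c f) * cis (2 * pi * (f \<bullet> s))" for s f
  note xcorr = fourier2_cross_correlation[OF q.bounded_support_axioms pupil.bounded_support_axioms,
      folded c_def]
  have "integrable lborel (\<lambda>\<rho>. q \<rho> * pupil_re (\<rho> + f))" for f
    by (rule Bochner_Integration.integrable_bound[OF q.integrable_b])
       (auto simp: pupil_re_def q_nonneg)
  note int = this
  have corr_c: "corr f = c f - c (- f)" for f
    using Bochner_Integration.integral_diff[OF int[of f] int[of "- f"]]
    by (simp add: corr_def c_def right_diff_distrib)
  have [measurable]: "C s \<in> borel_measurable borel" for s
    unfolding C_def[abs_def] using borel_measurable_integrable[OF xcorr(1)[of s]] by simp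
  have "(LINT f|lborel. complex_of_real (c (- f)) * cis (2 * pi * (f \<bullet> r))) =
      (LINT f|lborel. C (- r) f)"
    using integral_lborel_uminus[of "C (- r)"] by (simp add: C_def)
  moreover have "integrable lborel (\<lambda>f. complex_of_real (c (- f)) * cis (2 * pi * (f \<bullet> r)))"
    using integrable_rotation_iff[of "C (- r)" pi] xcorr(1)[of "- r"]
    by (simp add: C_def[abs_def] rotation_pi)
  ultimately have "(LINT f|lborel. complex_of_real (corr f) * cis (2 * pi * (f \<bullet> r)))
      = (LINT f|lborel. C r f) - (LINT f|lborel. C (- r) f)"
    using xcorr(1)[of r] unfolding corr_c C_def
    by (simp add: Bochner_Integration.integral_diff[symmetric] left_diff_distrib)
  moreover have "(LINT f|lborel. C s f) = fourier2 q (- s) * fourier2 pupil_re s" for s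
    using xcorr(2)[of s] by (simp add: C_def)
  ultimately show ?thesis
    by (simp add: H_def inv_FT2_def Htilde_eq_corr mult.assoc)
qed

lemma measurable_H [measurable]: "H \<in> borel_measurable borel"
  unfolding H_eq_fourier[abs_def] by measurable

lemma integrable_H: "integrable lborel H"
proof (rule Bochner_Integration.integrable_bound)
  show "integrable lborel (\<lambda>r. A * ((norm (fourier2 pupil_re r))\<^sup>2
      + (norm (fourier2 q r))\<^sup>2))"
    by (intro integrable_mult_right Bochner_Integration.integrable_add
        pupil.square_integrable_fourier2 q.square_integrable_fourier2)
  have "norm (H r) \<le> A * ((norm (fourier2 pupil_re r))\<^sup>2 + (norm (fourier2 q r))\<^sup>2)" for r
  proof -
    let ?a = "norm (fourier2 pupil_re r)" and ?b = "norm (fourier2 q r)"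
    have "norm (H r) \<le> A * (?a * ?b + ?a * ?b)"
      unfolding H_eq_fourier using A_pos
      by (auto simp: norm_mult fourier2_uminus intro!: mult_left_mono order_trans[OF norm_triangle_ineq4])
    also have "\<dots> \<le> A * (?a\<^sup>2 + ?b\<^sup>2)"
      using A_pos sum_squares_bound[of ?a ?b] by (intro mult_left_mono) (auto simp: power2_eq_square mult_ac)
    finally show ?thesis .
  qed
  then show "AE r in lborel. norm (H r) \<le> norm (A * ((norm (fourier2 pupil_re r))\<^sup>2
      + (norm (fourier2 q r))\<^sup>2))"
    using A_pos by (intro AE_I2) (simp add: order_trans[OF _ abs_ge_self])
qed simp

lemma H_uminus: "H (- r) = - H r"
  by (simp add: H_eq_fourier algebra_simps)

lemma integral_H: "(LINT r|lborel. H r) = 0"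
  using integral_lborel_uminus[of H] by (simp add: H_uminus)

definition "edge_response s = (LINT r|lborel. H r * complex_of_real (sgn (s - r \<bullet> dir \<theta>)))"

lemma integrable_H_times:
  assumes [measurable]: "g \<in> borel_measurable borel" and "\<And>x. \<bar>g x\<bar> \<le> c"
  shows "integrable lborel (\<lambda>r. H r * complex_of_real (g (r \<bullet> dir \<theta>)))"
proof (rule Bochner_Integration.integrable_bound[OF integrable_mult_right[OF integrable_norm[OF
    integrable_H], of c]])
  have "norm (H x) * \<bar>g (x \<bullet> dir \<theta>)\<bar> \<le> \<bar>c * norm (H x)\<bar>" for x
    using mult_left_mono[OF assms(2)[of "x \<bullet> dir \<theta>"] norm_ge_zero[of "H x"]]
    by (simp add: abs_mult mult.commute order_trans[OF _ mult_right_mono[OF abs_ge_self]])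
  then show "AE x in lborel. norm (H x * complex_of_real (g (x \<bullet> dir \<theta>)))
      \<le> norm (c * norm (H x))"
    by (simp add: norm_mult)
qed simp

text \<open>\<open>H\<close> is integrable, so the improper integral defining \<open>conv2\<close>
    is an ordinary one.\<close>
lemma conv2_eq_edge_response:
  "conv2 (inv_FT2 (Htilde A lam NA q)) (step_edge \<theta>) r = edge_response (r \<bullet> dir \<theta>)"
proof -
  let ?h = "\<lambda>r'. H r' * complex_of_real (sgn (r \<bullet> dir \<theta> - r' \<bullet> dir \<theta>))"
  have "step_edge \<theta> (r - r') = complex_of_real (sgn (r \<bullet> dir \<theta> - r' \<bullet>
      dir \<theta>))" for r'
    by (simp add: step_edge_def dir_def inner_diff_left)
  then have "conv2 H (step_edge \<theta>) r
      = Lim at_top (\<lambda>R. LINT r'|lborel. indicator (ball 0 R) r' * ?h r')"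
    by (simp add: conv2_def mult.assoc)
  moreover have "((\<lambda>R. LINT r'|lborel. indicator (ball 0 R) r' * ?h r')
      \<longlongrightarrow> (LINT r'|lborel. ?h r')) at_top"
  proof (rule integral_dominated_convergence_at_top[where w="\<lambda>r. norm (H r)"])
    show "AE x in lborel. ((\<lambda>R. indicator (ball 0 R) x * ?h x) \<longlongrightarrow> ?h x) at_top"
    proof (rule AE_I2)
      fix x :: "real \<times> real"
      have "eventually (\<lambda>R. indicator (ball 0 R) x * ?h x = ?h x) at_top"
        using eventually_gt_at_top[of "norm x"] by eventually_elim (simp add: indicator_def)
      then show "((\<lambda>R. indicator (ball 0 R) x * ?h x) \<longlongrightarrow> ?h x) at_top"
        by (rule tendsto_eventually)
    qed
    show "\<forall>\<^sub>F R in at_top. AE x in lborel. norm (indicator (ball 0 R) x * ?h x)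
        \<le> norm (H x)"
      by (intro always_eventually allI AE_I2) (auto simp: norm_mult indicator_def sgn_real_def)
  qed (use integrable_H in simp_all)
  ultimately show ?thesis
    unfolding edge_response_def H_def[symmetric] by (simp add: tendsto_Lim)
qed

text \<open>Since \<open>H\<close> is odd, the response vanishes far from the edge.\<close>
lemma edge_response_tendsto_0: "(edge_response \<longlongrightarrow> 0) at_top"
proof -
  have "((\<lambda>s. LINT r|lborel. H r * complex_of_real (sgn (s - r \<bullet> dir \<theta>)))
      \<longlongrightarrow> (LINT r|lborel. H r)) at_top"
  proof (rule integral_dominated_convergence_at_top[where w="\<lambda>r. norm (H r)"])
    show "AE x in lborel. ((\<lambda>s. H x * complex_of_real (sgn (s - x \<bullet> dir \<theta>)))
        \<longlongrightarrow> H x) at_top"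
    proof (rule AE_I2)
      fix x :: "real \<times> real"
      have "eventually (\<lambda>s. H x * complex_of_real (sgn (s - x \<bullet> dir \<theta>)) = H x) at_top"
        using eventually_gt_at_top[of "x \<bullet> dir \<theta>"] by eventually_elim simp
      then show "((\<lambda>s. H x * complex_of_real (sgn (s - x \<bullet> dir \<theta>)))
          \<longlongrightarrow> H x) at_top"
        by (rule tendsto_eventually)
    qed
    show "\<forall>\<^sub>F s in at_top. AE x in lborel. norm (H x
        * complex_of_real (sgn (s - x \<bullet> dir \<theta>))) \<le> norm (H x)"
      by (intro always_eventually allI AE_I2) (auto simp: norm_mult sgn_real_def)
  qed (use integrable_H in simp_all)
  then show ?thesis unfolding edge_response_def[abs_def] integral_H .
qed

end

section \<open>The jump of the sign function across an interval\<close>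

definition sgn_jump :: "real \<Rightarrow> real \<Rightarrow> real" where
  "sgn_jump s x = sgn (s - x) - sgn (- x)"

definition fourier_sgn_jump :: "real \<Rightarrow> real \<Rightarrow> complex" where
  "fourier_sgn_jump s k = (LINT x|lborel. complex_of_real (sgn_jump s x) * cis (2 * pi * k * x))"

definition sine_sgn_jump :: "real \<Rightarrow> real \<Rightarrow> real" where
  "sine_sgn_jump s k = (LINT x|lborel. sgn_jump s x * sin (2 * pi * k * x))"

definition "sgn_jump_l1 s = (LINT x|lborel. \<bar>sgn_jump s x\<bar>)"

lemma measurable_sgn_jump[measurable]: "sgn_jump s \<in> borel_measurable borel"
  unfolding sgn_jump_def by measurable

lemma abs_sgn_jump_le: "\<bar>sgn_jump s x\<bar> \<le> 2"
  by (auto simp: sgn_jump_def sgn_real_def)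

lemma sgn_jump_eq_0: "\<bar>x\<bar> > \<bar>s\<bar> \<Longrightarrow> sgn_jump s x = 0"
  by (auto simp: sgn_jump_def sgn_real_def)

lemma integrable_sgn_jump: "integrable lborel (sgn_jump s)"
  by (rule integrable_bounded_ball_support[where M=2 and r="\<bar>s\<bar>
      + 1"]) (auto simp: abs_sgn_jump_le intro!: sgn_jump_eq_0)

lemma integrable_sgn_jump_cis: "integrable lborel (\<lambda>x. complex_of_real (sgn_jump s x) * cis (c * x))"
  by (rule Bochner_Integration.integrable_bound[OF integrable_norm[OF integrable_sgn_jump[of s]]])
     (auto simp: norm_mult)

lemma measurable_fourier_sgn_jump [measurable]: "fourier_sgn_jump s \<in> borel_measurable borel"
  unfolding fourier_sgn_jump_def by measurable

lemma sgn_jump_l1_nonneg: "sgn_jump_l1 s \<ge> 0"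
  unfolding sgn_jump_l1_def by (rule integral_nonneg_AE) auto

lemma norm_fourier_sgn_jump_le: "cmod (fourier_sgn_jump s k) \<le> sgn_jump_l1 s"
proof -
  have "cmod (fourier_sgn_jump s k) \<le> (LINT x|lborel. norm (complex_of_real (sgn_jump s x)
      * cis (2 * pi * k * x)))"
    unfolding fourier_sgn_jump_def by (rule integral_norm_bound)
  also have "\<dots> = sgn_jump_l1 s" by (simp add: sgn_jump_l1_def norm_mult)
  finally show ?thesis .
qed

lemma integrable_sgn_jump_sin: "integrable lborel (\<lambda>x. sgn_jump s x * sin (2 * pi * k * x))"
  by (rule Bochner_Integration.integrable_bound[OF integrable_norm[OF integrable_sgn_jump[of s]]])
      (auto simp: abs_mult intro!: mult_left_le)

lemma fourier_sgn_jump_diff: "fourier_sgn_jump s k - fourier_sgn_jump s (- k) = 2 * \<i>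
    * complex_of_real (sine_sgn_jump s k)"
proof -
  have "fourier_sgn_jump s k - fourier_sgn_jump s (- k) =
      (LINT x|lborel. complex_of_real (sgn_jump s x) * cis (2 * pi * k
      * x) - complex_of_real (sgn_jump s x) * cis (2 * pi * (- k) * x))"
    unfolding fourier_sgn_jump_def by (rule Bochner_Integration.integral_diff[OF
        integrable_sgn_jump_cis integrable_sgn_jump_cis, symmetric])
  also have "\<dots> = (LINT x|lborel. 2 * \<i> * complex_of_real (sgn_jump s x * sin (2 * pi * k * x)))"
  proof (intro Bochner_Integration.integral_cong refl)
    fix x
    have "cis (2 * pi * k * x) - cis (2 * pi * (- k) * x) = 2 * \<i> * complex_of_real (sin (2 * pi * k * x))"
      by (simp add: cis.ctr complex_eq_iff)
    then show "complex_of_real (sgn_jump s x) * cis (2 * pi * k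
        * x) - complex_of_real (sgn_jump s x) * cis (2 * pi * (- k) * x) = 2 * \<i>
        * complex_of_real (sgn_jump s x * sin (2 * pi * k * x))"
      by (simp add: right_diff_distrib[symmetric] algebra_simps)
  qed
  also have "\<dots> = 2 * \<i> * complex_of_real (sine_sgn_jump s k)"
    unfolding sine_sgn_jump_def by (simp only: integral_mult_right_zero integral_complex_of_real)
  finally show ?thesis .
qed


lemma sine_sgn_jump_eq_pos:
  assumes s: "s > 0" and k: "k \<noteq> 0"
  shows "sine_sgn_jump s k = (1 - cos (2 * pi * k * s)) / (pi * k)"
proof -
  have "AE x in lborel. x \<noteq> s"
    by (rule AE_I'[where N="{s}"]) auto
  then have "sine_sgn_jump s k = (LINT x|lborel. indicator {0..s} x *\<^sub>R (2 * sin (2 * pi * k * x)))"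
    unfolding sine_sgn_jump_def
    by (intro integral_cong_AE) (use s in \<open>auto elim!: eventually_mono simp: sgn_jump_def
        sgn_real_def indicator_def\<close>)
  also have "\<dots> = (- cos (2 * pi * k * s) / (pi * k)) - (- cos (2 * pi * k * 0) / (pi * k))"
  proof (rule integral_FTC_atLeastAtMost)
    fix x
    have "((\<lambda>x. - cos (2 * pi * k * x) / (pi * k)) has_real_derivative (2 * sin (2 * pi * k
        * x))) (at x within {0..s})"
      using k by (auto intro!: derivative_eq_intros simp: field_simps)
    then show "((\<lambda>x. - cos (2 * pi * k * x) / (pi * k)) has_vector_derivative (2 * sin (2
        * pi * k * x))) (at x within {0..s})"
      by (simp add: has_real_derivative_iff_has_vector_derivative)
  qed (use s in \<open>auto intro!: continuous_intros\<close>)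
  also have "\<dots> = (1 - cos (2 * pi * k * s)) / (pi * k)" by (simp add: diff_divide_distrib)
  finally show ?thesis .
qed

lemma sine_sgn_jump_uminus: "sine_sgn_jump (- s) k = sine_sgn_jump s k"
proof -
  have "sgn_jump (- s) (- x) * sin (2 * pi * k * (- x)) = sgn_jump s x * sin (2 * pi * k * x)" for x
    by (auto simp: sgn_jump_def sgn_real_def)
  then show ?thesis
    using lborel_integral_real_affine[of "- 1" "\<lambda>x. sgn_jump (- s) x * sin (2 * pi * k * x)" 0]
    by (simp add: sine_sgn_jump_def)
qed

lemma sine_sgn_jump_eq: "sine_sgn_jump s k = (1 - cos (2 * pi * k * s)) / (pi * k)"
proof (cases "k = 0 \<or> s = 0")
  case True
  then show ?thesis by (auto simp: sine_sgn_jump_def sgn_jump_def)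
next
  case False
  then show ?thesis
    using sine_sgn_jump_eq_pos[of s k] sine_sgn_jump_eq_pos[of "- s" k] sine_sgn_jump_uminus[of "- s" k]
    by (cases "s > 0") auto
qed

lemma abs_sine_sgn_jump_le: "\<bar>sine_sgn_jump s k\<bar> \<le> sgn_jump_l1 s"
proof -
  have "\<bar>sine_sgn_jump s k\<bar> \<le> (LINT x|lborel. norm (sgn_jump s x * sin (2 * pi * k * x)))"
    unfolding sine_sgn_jump_def using integral_norm_bound[of lborel "\<lambda>x. sgn_jump s x
        * sin (2 * pi * k * x)"] by simp
  also have "\<dots> \<le> sgn_jump_l1 s"
    unfolding sgn_jump_l1_def
    by (intro Bochner_Integration.integral_mono integrable_sgn_jump_sin[THEN integrable_norm]
        integrable_abs[OF integrable_sgn_jump])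
       (auto simp: abs_mult intro!: mult_left_le)
  finally show ?thesis .
qed

section \<open>Damping along the edge\<close>

text \<open>Multiplying the step by a wide Gaussian along the edge makes the product with \<open>H\<close>
  absolutely integrable on the product space; Fubini then turns the response into an
  integral over the transfer function, and letting the damping width tend to infinity
  concentrates the Gaussian kernel on the normal line \<open>k dir \<theta>\<close>.\<close>

lemma fourier_sgn_jump_gauss_damp:
  assumes m: "m > 0"
  shows "(LINT r|lborel. cis (2 * pi * (f \<bullet> r))
      * complex_of_real (sgn_jump s (r \<bullet> dir t) * gauss_damp m (r \<bullet> dir_perp t)))
     = fourier_sgn_jump s (f \<bullet> dir t) * complex_of_real (gauss_kernel m (f \<bullet> dir_perp t))"
proof -
  let ?g = "\<lambda>x. complex_of_real (sgn_jump s x) * cis (2 * pi * (f \<bullet> dir t) * x)"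
  let ?h = "\<lambda>y. complex_of_real (gauss_damp m y) * cis (2 * pi * (f \<bullet> dir_perp t) * y)"
  have "(LINT r|lborel. cis (2 * pi * (f \<bullet> r))
      * complex_of_real (sgn_jump s (r \<bullet> dir t) * gauss_damp m (r \<bullet> dir_perp t)))
      = (LINT r|lborel. ?g (r \<bullet> dir t) * ?h (r \<bullet> dir_perp t))"
  proof (intro Bochner_Integration.integral_cong refl)
    fix r :: "real \<times> real"
    have "cis (2 * pi * (f \<bullet> r)) = cis (2 * pi * (f \<bullet> dir t) * (r \<bullet> dir t))
        * cis (2 * pi * (f \<bullet> dir_perp t) * (r \<bullet> dir_perp t))"
      by (subst inner_dir_dir_perp_expand[of f r t]) (simp add: cis_mult algebra_simps)
    then show "cis (2 * pi * (f \<bullet> r)) * complex_of_real (sgn_jump s (r \<bullet> dir t)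
        * gauss_damp m (r \<bullet> dir_perp t)) = ?g (r \<bullet> dir t) * ?h (r \<bullet> dir_perp t)"
      by (simp add: algebra_simps)
  qed
  also have "\<dots> = (LINT x|lborel. ?g x) * (LINT y|lborel. ?h y)"
    by (rule integral_dir_product[OF integrable_sgn_jump_cis integrable_gauss_damp_cis[OF m]])
  also have "\<dots> = fourier_sgn_jump s (f \<bullet> dir t)
      * complex_of_real (gauss_kernel m (f \<bullet> dir_perp t))"
    by (simp add: fourier_sgn_jump_def fourier_gauss_damp[OF m])
  finally show ?thesis .
qed

context half_disk_illumination
begin

lemma corr_rotation_eq_0: "\<bar>k\<bar> \<ge> 2 * cutoff
    \<Longrightarrow> corr (rotation \<theta> (k, w)) = 0"
proof (rule corr_eq_0_outside)
  assume "\<bar>k\<bar> \<ge> 2 * cutoff"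
  moreover have "\<bar>k\<bar> \<le> norm (k, w)"
    by (simp add: norm_prod_def real_le_rsqrt)
  ultimately show "norm (rotation \<theta> (k, w)) \<ge> 2 * cutoff" by (simp add: norm_rotation)
qed

lemma H_eq_inv_fourier_corr: "H r = (LINT f|lborel. \<i> * complex_of_real A
    * complex_of_real (corr f) * cis (2 * pi * (f \<bullet> r)))"
  by (simp add: H_def inv_FT2_def Htilde_eq_corr)

lemma edge_response_diff: "edge_response s - edge_response 0 = (LINT r|lborel. H r
    * complex_of_real (sgn_jump s (r \<bullet> dir \<theta>)))"
proof -
  have i1: "integrable lborel (\<lambda>r. H r
      * complex_of_real ((\<lambda>x. sgn (s - x)) (r \<bullet> dir \<theta>)))"
    by (rule integrable_H_times[where c=1]) (auto simp: sgn_real_def)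
  have i2: "integrable lborel (\<lambda>r. H r
      * complex_of_real ((\<lambda>x. sgn (0 - x)) (r \<bullet> dir \<theta>)))"
    by (rule integrable_H_times[where c=1]) (auto simp: sgn_real_def)
  have "edge_response s - edge_response 0 = (LINT r|lborel. H r
      * complex_of_real ((\<lambda>x. sgn (s - x)) (r \<bullet> dir \<theta>)) - H r
      * complex_of_real ((\<lambda>x. sgn (0 - x)) (r \<bullet> dir \<theta>)))"
    unfolding edge_response_def by (rule Bochner_Integration.integral_diff[OF i1 i2, symmetric])
  also have "\<dots> = (LINT r|lborel. H r * complex_of_real (sgn_jump s (r \<bullet> dir \<theta>)))"
    by (intro Bochner_Integration.integral_cong refl) (simp add: sgn_jump_def algebra_simps)
  finally show ?thesis .
qed


definition "damped_response s m = (LINT r|lborel. H r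
    * complex_of_real (sgn_jump s (r \<bullet> dir \<theta>)
    * gauss_damp m (r \<bullet> dir_perp \<theta>)))"

lemma damped_response_tendsto: "(\<lambda>j. damped_response s (real (Suc j)))
    \<longlonglongrightarrow> edge_response s - edge_response 0"
  unfolding edge_response_diff damped_response_def
proof (rule integral_dominated_convergence[where w="\<lambda>r. 2 * norm (H r)"])
  show "integrable lborel (\<lambda>r. 2 * norm (H r))" using integrable_H by simp
  show "(\<lambda>r. H r * complex_of_real (sgn_jump s (r \<bullet> dir \<theta>))) \<in>
      borel_measurable lborel" by measurable
  show "(\<lambda>r. H r * complex_of_real (sgn_jump s (r \<bullet> dir \<theta>)
      * gauss_damp (real (Suc j)) (r \<bullet> dir_perp \<theta>))) \<in> borel_measurable lborel" for j
    by measurable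
  show "AE x in lborel. (\<lambda>j. H x * complex_of_real (sgn_jump s (x \<bullet> dir \<theta>)
      * gauss_damp (real (Suc j)) (x \<bullet> dir_perp \<theta>))) \<longlonglongrightarrow> H x
      * complex_of_real (sgn_jump s (x \<bullet> dir \<theta>))"
  proof (rule AE_I2)
    fix x :: "real \<times> real"
    have "(\<lambda>j. H x * complex_of_real (sgn_jump s (x \<bullet> dir \<theta>)
        * gauss_damp (real (Suc j)) (x \<bullet> dir_perp \<theta>))) \<longlonglongrightarrow> H x
        * complex_of_real (sgn_jump s (x \<bullet> dir \<theta>) * 1)"
      by (intro tendsto_intros gauss_damp_tendsto_1)
    then show "(\<lambda>j. H x * complex_of_real (sgn_jump s (x \<bullet> dir \<theta>)
        * gauss_damp (real (Suc j)) (x \<bullet> dir_perp \<theta>))) \<longlonglongrightarrow> H x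
        * complex_of_real (sgn_jump s (x \<bullet> dir \<theta>))"
      by simp
  qed
  show "AE x in lborel. norm (H x * complex_of_real (sgn_jump s (x \<bullet> dir \<theta>)
      * gauss_damp (real (Suc j)) (x \<bullet> dir_perp \<theta>))) \<le> 2 * norm (H x)" for j
  proof (rule AE_I2)
    fix x :: "real \<times> real"
    have "\<bar>sgn_jump s (x \<bullet> dir \<theta>)
        * gauss_damp (real (Suc j)) (x \<bullet> dir_perp \<theta>)\<bar> \<le> 2 * 1"
      unfolding abs_mult using abs_sgn_jump_le gauss_damp_le_1 gauss_damp_nonneg by (intro mult_mono) auto
    then show "norm (H x * complex_of_real (sgn_jump s (x \<bullet> dir \<theta>)
        * gauss_damp (real (Suc j)) (x \<bullet> dir_perp \<theta>))) \<le> 2 * norm (H x)"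
    proof -
      have "norm (H x * complex_of_real (sgn_jump s (x \<bullet> dir \<theta>)
          * gauss_damp (real (Suc j)) (x \<bullet> dir_perp \<theta>)))
          = norm (H x) * \<bar>sgn_jump s (x \<bullet> dir \<theta>)
              * gauss_damp (real (Suc j)) (x \<bullet> dir_perp \<theta>)\<bar>"
        by (simp only: norm_mult norm_of_real)
      also have "\<dots> \<le> norm (H x) * (2 * 1)" by (intro mult_left_mono) (fact, simp)
      finally show ?thesis by simp
    qed
  qed
qed

lemma damped_response_eq:
  assumes m: "m > 0"
  shows "damped_response s m = (LINT f|lborel. \<i> * complex_of_real A * complex_of_real (corr f)
      * (fourier_sgn_jump s (f \<bullet> dir \<theta>)
      * complex_of_real (gauss_kernel m (f \<bullet> dir_perp \<theta>))))"
proof -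
  define E where "E r = sgn_jump s (r \<bullet> dir \<theta>)
      * gauss_damp m (r \<bullet> dir_perp \<theta>)" for r :: "real \<times> real"
  have Em[measurable]: "E \<in> borel_measurable borel" unfolding E_def by measurable
  have Eint: "integrable lborel E"
    unfolding E_def by (rule integrable_dir_product[OF integrable_sgn_jump integrable_gauss_damp[OF m]])
  define F where "F r f = \<i> * complex_of_real A * complex_of_real (corr f) * cis (2 * pi
      * (f \<bullet> r)) * complex_of_real (E r)" for r f :: "real \<times> real"
  have Fint: "integrable (lborel \<Otimes>\<^sub>M lborel) (case_prod F)"
  proof (rule Bochner_Integration.integrable_bound)
    show "integrable (lborel \<Otimes>\<^sub>M lborel) (\<lambda>x. \<bar>E (fst x)\<bar> * (A
        * \<bar>corr (snd x)\<bar>))"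
      by (rule integrable_pair_product[OF sigma_finite_lborel sigma_finite_lborel])
          (use Eint integrable_corr in auto)
    show "case_prod F \<in> borel_measurable (lborel \<Otimes>\<^sub>M lborel)" unfolding F_def by measurable
    show "AE x in lborel \<Otimes>\<^sub>M lborel. norm (case_prod F x)
        \<le> norm (\<bar>E (fst x)\<bar> * (A * \<bar>corr (snd x)\<bar>))"
      by (rule AE_I2) (use A_pos in \<open>auto simp: F_def norm_mult abs_mult\<close>)
  qed
  have "damped_response s m = (LINT r|lborel. LINT f|lborel. F r f)"
    unfolding damped_response_def H_eq_inv_fourier_corr F_def E_def by (simp add: integral_mult_left_zero)
  also have "\<dots> = (LINT f|lborel. LINT r|lborel. F r f)"
    by (rule lborel_pair.Fubini_integral[OF Fint, symmetric])
  also have "\<dots> = (LINT f|lborel. \<i> * complex_of_real A * complex_of_real (corr f)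
      * (fourier_sgn_jump s (f \<bullet> dir \<theta>)
      * complex_of_real (gauss_kernel m (f \<bullet> dir_perp \<theta>))))"
  proof (intro Bochner_Integration.integral_cong refl)
    fix f :: "real \<times> real"
    have "(LINT r|lborel. F r f) = \<i> * complex_of_real A * complex_of_real (corr f) *
        (LINT r|lborel. cis (2 * pi * (f \<bullet> r))
        * complex_of_real (sgn_jump s (r \<bullet> dir \<theta>)
        * gauss_damp m (r \<bullet> dir_perp \<theta>)))"
      unfolding F_def E_def by (simp add: mult.assoc)
    also have "\<dots> = \<i> * complex_of_real A * complex_of_real (corr f)
        * (fourier_sgn_jump s (f \<bullet> dir \<theta>)
        * complex_of_real (gauss_kernel m (f \<bullet> dir_perp \<theta>)))"
      by (subst fourier_sgn_jump_gauss_damp[OF m]) (rule refl)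
    finally show "(LINT r|lborel. F r f) = \<i> * complex_of_real A * complex_of_real (corr f)
        * (fourier_sgn_jump s (f \<bullet> dir \<theta>)
        * complex_of_real (gauss_kernel m (f \<bullet> dir_perp \<theta>)))" .
  qed
  finally show ?thesis .
qed

definition "smoothed_corr m k = (LINT w|lborel. corr (rotation \<theta> (k, w)) * gauss_kernel m w)"

lemma measurable_smoothed_corr[measurable]: "smoothed_corr m \<in> borel_measurable borel"
proof -
  have "(\<lambda>(k, w). corr (rotation \<theta> (k, w))
      * gauss_kernel m w) \<in> borel_measurable (lborel \<Otimes>\<^sub>M lborel)"
    by measurable
  then have "(\<lambda>k. LINT w|lborel. corr (rotation \<theta> (k, w))
      * gauss_kernel m w) \<in> borel_measurable lborel"
    by (rule lborel.borel_measurable_lebesgue_integral[where f="\<lambda>k w. corr (rotation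
        \<theta> (k, w)) * gauss_kernel m w"])
  then show ?thesis by (simp add: smoothed_corr_def[abs_def])
qed

lemma integrable_rotated_damped_spectrum:
  assumes m: "m > 0"
  shows "integrable (lborel \<Otimes>\<^sub>M lborel) (\<lambda>(k, w). \<i> * complex_of_real A
    * complex_of_real (corr (rotation \<theta> (k, w))) * (fourier_sgn_jump s k
        * complex_of_real (gauss_kernel m w)))"
    (is "integrable _ (case_prod ?\<Xi>)")
proof (rule Bochner_Integration.integrable_bound)
  let ?M = "A * corr_bound * sgn_jump_l1 s"
  show "integrable (lborel \<Otimes>\<^sub>M lborel) (\<lambda>x. ?M * indicator (ball (0::real) (2
      * cutoff)) (fst x) * gauss_kernel m (snd x))"
    by (rule integrable_lborel_product)
       (use emeasure_lborel_ball_finite[of "0::real" "2 * cutoff"]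
        in \<open>auto intro!: integrable_mult_right integrable_real_indicator
            integrable_gauss_kernel m\<close>)
  have "norm (?\<Xi> k w) \<le> ?M * indicator (ball (0::real) (2 * cutoff)) k * gauss_kernel m w" for k w
  proof (cases "\<bar>k\<bar> < 2 * cutoff")
    case True
    have "norm (?\<Xi> k w) = A * \<bar>corr (rotation \<theta> (k, w))\<bar>
        * (norm (fourier_sgn_jump s k) * gauss_kernel m w)"
      using A_pos gauss_kernel_nonneg[OF m] by (simp add: norm_mult)
    also have "\<dots> \<le> A * corr_bound * (sgn_jump_l1 s * gauss_kernel m w)"
      using A_pos gauss_kernel_nonneg[OF m] abs_corr_le norm_fourier_sgn_jump_le corr_bound_nonneg
          sgn_jump_l1_nonneg
      by (intro mult_mono mult_left_mono) auto
    finally show ?thesis using True by (simp add: mult_ac)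
  qed (simp add: corr_rotation_eq_0)
  then show "AE x in lborel \<Otimes>\<^sub>M lborel.
      norm (case_prod ?\<Xi> x) \<le> norm (?M * indicator (ball (0::real) (2 * cutoff)) (fst x)
          * gauss_kernel m (snd x))"
    using A_pos gauss_kernel_nonneg[OF m] corr_bound_nonneg sgn_jump_l1_nonneg
    by (intro AE_I2) (auto simp: abs_mult split: prod.split)
qed measurable

lemma damped_response_eq_smoothed_corr:
  assumes m: "m > 0"
  shows "damped_response s m
    = (LINT k|lborel. \<i> * complex_of_real A * fourier_sgn_jump s k * complex_of_real (smoothed_corr m k))"
proof -
  define \<Theta> where "\<Theta> f = \<i> * complex_of_real A * complex_of_real (corr f)
      * (fourier_sgn_jump s (f \<bullet> dir \<theta>)
          * complex_of_real (gauss_kernel m (f \<bullet> dir_perp \<theta>)))" for f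
  have \<Theta>m[measurable]: "\<Theta> \<in> borel_measurable borel" unfolding \<Theta>_def by measurable
  define \<Xi> where "\<Xi> k w = \<i> * complex_of_real A * complex_of_real (corr (rotation \<theta> (k, w)))
      * (fourier_sgn_jump s k * complex_of_real (gauss_kernel m w))" for k w
  have \<Xi>int: "integrable (lborel \<Otimes>\<^sub>M lborel) (case_prod \<Xi>)"
    unfolding \<Xi>_def[abs_def] by (rule integrable_rotated_damped_spectrum[OF m])
  have "damped_response s m = (LINT f|lborel. \<Theta> f)" unfolding damped_response_eq[OF m] \<Theta>_def ..
  also have "\<dots> = (LINT x|lborel. \<Theta> (rotation \<theta> x))"
      by (rule integral_rotation[symmetric]) simp
  also have "\<dots> = (LINT x|(lborel \<Otimes>\<^sub>M lborel). case_prod \<Xi> x)"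
    by (simp add: lborel_prod \<Theta>_def \<Xi>_def inner_rotation_dir inner_rotation_dir_perp
        case_prod_beta')
  also have "\<dots> = (LINT k|lborel. LINT w|lborel. \<Xi> k w)"
    by (rule lborel_pair.integral_fst[OF \<Xi>int, symmetric])
  also have "\<dots> = (LINT k|lborel. \<i> * complex_of_real A * fourier_sgn_jump s k
      * complex_of_real (smoothed_corr m k))"
  proof (intro Bochner_Integration.integral_cong refl)
    fix k :: real
    have "(LINT w|lborel. \<Xi> k w) = \<i> * complex_of_real A * fourier_sgn_jump s k *
        (LINT w|lborel. complex_of_real (corr (rotation \<theta> (k, w)) * gauss_kernel m w))"
      unfolding \<Xi>_def by (simp add: mult_ac)
    then show "(LINT w|lborel. \<Xi> k w) = \<i> * complex_of_real A * fourier_sgn_jump s k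
        * complex_of_real (smoothed_corr m k)"
      unfolding smoothed_corr_def integral_complex_of_real .
  qed
  finally show ?thesis .
qed

lemma smoothed_corr_eq:
  assumes m: "m > 0"
  shows "smoothed_corr m k = (LINT t|lborel. corr (rotation \<theta> (k, t / (2 * pi * m)))
      * std_normal_density t)"
proof -
  have "smoothed_corr m k = \<bar>1 / (2 * pi * m)\<bar> *\<^sub>R
      (LINT t|lborel. corr (rotation \<theta> (k, 0 + 1 / (2 * pi * m) * t)) * gauss_kernel m (0
      + 1 / (2 * pi * m) * t))"
    unfolding smoothed_corr_def by (rule lborel_integral_real_affine) (use m in simp)
  also have "(\<lambda>t. corr (rotation \<theta> (k, 0 + 1 / (2 * pi * m) * t))
      * gauss_kernel m (0 + 1 / (2 * pi * m) * t)) = (\<lambda>t. (2 * pi * m)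
      * (corr (rotation \<theta> (k, t / (2 * pi * m))) * std_normal_density t))"
    using m by (auto simp: gauss_kernel_def)
  finally show ?thesis using m by simp
qed

lemma abs_corr_std_normal_le: "norm (corr x * std_normal_density t) \<le> corr_bound * std_normal_density t"
proof -
  have "norm (corr x * std_normal_density t) = \<bar>corr x\<bar> * std_normal_density t"
    by (simp add: abs_mult normal_density_nonneg)
  also have "\<dots> \<le> corr_bound * std_normal_density t"
    by (intro mult_right_mono abs_corr_le normal_density_nonneg)
  finally show ?thesis .
qed

lemma integrable_corr_rotation_std_normal: "integrable lborel (\<lambda>t. corr (rotation \<theta>
    (k, c * t)) * std_normal_density t)"
proof (rule Bochner_Integration.integrable_bound[OF integrable_mult_right[OF
    integrable_std_normal_density, of corr_bound]])
  show "(\<lambda>t. corr (rotation \<theta> (k, c * t))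
      * std_normal_density t) \<in> borel_measurable lborel" by measurable
  show "AE x in lborel. norm (corr (rotation \<theta> (k, c * x)) * std_normal_density x)
      \<le> norm (corr_bound * std_normal_density x)"
    by (rule AE_I2) (use abs_corr_std_normal_le corr_bound_nonneg
        in \<open>simp add: abs_mult normal_density_nonneg\<close>)
qed

lemma abs_smoothed_corr_le:
  assumes m: "m > 0"
  shows "\<bar>smoothed_corr m k\<bar> \<le> corr_bound"
proof -
  have "\<bar>smoothed_corr m k\<bar> \<le>
      (LINT t|lborel. norm (corr (rotation \<theta> (k, t / (2 * pi * m))) * std_normal_density t))"
    unfolding smoothed_corr_eq[OF m] using integral_norm_bound[of lborel "\<lambda>t. corr
        (rotation \<theta> (k, t / (2 * pi * m))) * std_normal_density t"] by simp
  also have "\<dots> \<le> (LINT t|lborel. corr_bound * std_normal_density t)"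
  proof (rule Bochner_Integration.integral_mono)
    show "integrable lborel (\<lambda>t. norm (corr (rotation \<theta> (k, t / (2 * pi * m)))
        * std_normal_density t))"
      using integrable_corr_rotation_std_normal[of k "1 / (2 * pi * m)"] by simp
    show "integrable lborel (\<lambda>t. corr_bound * std_normal_density t)"
      by (intro integrable_mult_right integrable_std_normal_density)
    show "norm (corr (rotation \<theta> (k, t / (2 * pi * m))) * std_normal_density t)
        \<le> corr_bound * std_normal_density t" for t
      by (rule abs_corr_std_normal_le)
  qed
  also have "\<dots> = corr_bound" by (simp add: integral_std_normal_density)
  finally show ?thesis .
qed

lemma smoothed_corr_eq_0: "\<bar>k\<bar> \<ge> 2 * cutoff \<Longrightarrow> smoothed_corr m k = 0"
  by (simp add: smoothed_corr_def corr_rotation_eq_0)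

lemma smoothed_corr_tendsto: "(\<lambda>j. smoothed_corr (real (Suc j)) k)
    \<longlonglongrightarrow> corr (k *\<^sub>R dir \<theta>)"
proof -
  have "(\<lambda>j. LINT t|lborel. corr (rotation \<theta> (k, t / (2 * pi * real (Suc j))))
      * std_normal_density t) \<longlonglongrightarrow>
      (LINT t|lborel. corr (rotation \<theta> (k, 0)) * std_normal_density t)"
  proof (rule integral_dominated_convergence[where w="\<lambda>t. corr_bound * std_normal_density t"])
    show "integrable lborel (\<lambda>t. corr_bound * std_normal_density t)"
      by (intro integrable_mult_right integrable_std_normal_density)
    show "(\<lambda>t. corr (rotation \<theta> (k, 0))
        * std_normal_density t) \<in> borel_measurable lborel" by measurable
    show "(\<lambda>t. corr (rotation \<theta> (k, t / (2 * pi * real (Suc j))))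
        * std_normal_density t) \<in> borel_measurable lborel" for j
      by measurable
    show "AE t in lborel. (\<lambda>j. corr (rotation \<theta> (k, t / (2 * pi * real (Suc j))))
        * std_normal_density t) \<longlonglongrightarrow> corr (rotation \<theta> (k, 0))
        * std_normal_density t"
    proof (rule AE_I2)
      fix t :: real
      have z: "(\<lambda>j. t / (2 * pi * real (Suc j))) \<longlonglongrightarrow> 0"
      proof -
        have "(\<lambda>j. (t / (2 * pi)) * inverse (real (Suc j)))
            \<longlonglongrightarrow> (t / (2 * pi)) * 0"
          by (rule tendsto_mult_left[OF LIMSEQ_inverse_real_of_nat])
        then show ?thesis by (simp add: field_simps)
      qed
      have rc: "isCont (rotation \<theta>) x" for x
        by (metis continuous_on_eq_continuous_at open_UNIV continuous_on_rotation UNIV_I)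
      have "(\<lambda>j. (k, t / (2 * pi * real (Suc j)))) \<longlonglongrightarrow> (k, 0)"
        by (intro tendsto_Pair tendsto_const z)
      then have "(\<lambda>j. rotation \<theta> (k, t / (2 * pi * real (Suc j))))
          \<longlonglongrightarrow> rotation \<theta> (k, 0)"
        by (rule isCont_tendsto_compose[OF rc])
      then have "(\<lambda>j. corr (rotation \<theta> (k, t / (2 * pi * real (Suc j)))))
          \<longlonglongrightarrow> corr (rotation \<theta> (k, 0))"
        by (rule isCont_tendsto_compose[OF isCont_corr])
      then show "(\<lambda>j. corr (rotation \<theta> (k, t / (2 * pi * real (Suc j))))
          * std_normal_density t) \<longlonglongrightarrow> corr (rotation \<theta> (k, 0))
          * std_normal_density t"
        by (intro tendsto_intros)
    qed
    show "AE t in lborel. norm (corr (rotation \<theta> (k, t / (2 * pi * real (Suc j))))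
        * std_normal_density t) \<le> corr_bound * std_normal_density t" for j
      by (rule AE_I2) (rule abs_corr_std_normal_le)
  qed
  then show ?thesis
    by (simp add: smoothed_corr_eq integral_std_normal_density rotation_axis)
qed

lemma edge_response_diff_eq_fourier: "edge_response s - edge_response 0 = (LINT k|lborel. \<i>
    * complex_of_real A * fourier_sgn_jump s k * complex_of_real (corr (k *\<^sub>R dir \<theta>)))"
proof -
  have "(\<lambda>j. damped_response s (real (Suc j))) \<longlonglongrightarrow>
      (LINT k|lborel. \<i> * complex_of_real A * fourier_sgn_jump s k
      * complex_of_real (corr (k *\<^sub>R dir \<theta>)))"
    unfolding damped_response_eq_smoothed_corr[OF of_nat_0_less_iff[THEN iffD2, OF zero_less_Suc]]
  proof (rule integral_dominated_convergence[where w="\<lambda>k. A * sgn_jump_l1 s * corr_bound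
      * indicator (ball (0::real) (2 * cutoff)) k"])
    show "integrable lborel (\<lambda>k. A * sgn_jump_l1 s * corr_bound
        * indicator (ball (0::real) (2 * cutoff)) k)"
      using emeasure_lborel_ball_finite[of "0::real" "2 * cutoff"]
      by (intro integrable_mult_right integrable_real_indicator) auto
    show "(\<lambda>k. \<i> * complex_of_real A * fourier_sgn_jump s k
        * complex_of_real (corr (k *\<^sub>R dir \<theta>))) \<in> borel_measurable lborel"
      by measurable
    show "(\<lambda>k. \<i> * complex_of_real A * fourier_sgn_jump s k
        * complex_of_real (smoothed_corr (real (Suc j)) k)) \<in> borel_measurable lborel" for j
      by measurable
    show "AE k in lborel. (\<lambda>j. \<i> * complex_of_real A * fourier_sgn_jump s k
        * complex_of_real (smoothed_corr (real (Suc j)) k)) \<longlonglongrightarrow> \<i>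
        * complex_of_real A * fourier_sgn_jump s k * complex_of_real (corr (k *\<^sub>R dir \<theta>))"
      by (rule AE_I2) (intro tendsto_intros smoothed_corr_tendsto)
    show "AE k in lborel. norm (\<i> * complex_of_real A * fourier_sgn_jump s k
        * complex_of_real (smoothed_corr (real (Suc j)) k)) \<le> A * sgn_jump_l1 s * corr_bound
        * indicator (ball (0::real) (2 * cutoff)) k" for j
    proof (rule AE_I2)
      fix k :: real
      show "norm (\<i> * complex_of_real A * fourier_sgn_jump s k
          * complex_of_real (smoothed_corr (real (Suc j)) k)) \<le> A * sgn_jump_l1 s * corr_bound
          * indicator (ball (0::real) (2 * cutoff)) k"
      proof (cases "\<bar>k\<bar> < 2 * cutoff")
        case True
        have "norm (\<i> * complex_of_real A * fourier_sgn_jump s k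
            * complex_of_real (smoothed_corr (real (Suc j)) k)) = A * cmod (fourier_sgn_jump s k)
            * \<bar>smoothed_corr (real (Suc j)) k\<bar>"
          using A_pos by (simp add: norm_mult)
        also have "\<dots> \<le> A * sgn_jump_l1 s * corr_bound"
          using A_pos norm_fourier_sgn_jump_le abs_smoothed_corr_le[of "real (Suc j)" k]
              sgn_jump_l1_nonneg by (intro mult_mono mult_left_mono) auto
        finally show ?thesis using True by simp
      next
        case False
        then show ?thesis using smoothed_corr_eq_0[of k] by simp
      qed
    qed
  qed
  moreover have "(\<lambda>j. damped_response s (real (Suc j)))
      \<longlonglongrightarrow> edge_response s - edge_response 0" by (rule damped_response_tendsto)
  ultimately show ?thesis using LIMSEQ_unique by blast
qed

end

section \<open>The edge response as a cosine transform with nonnegative weight\<close>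

context half_disk_illumination
begin

definition "corr_dir k = corr (k *\<^sub>R dir \<theta>)"

lemma corr_dir_uminus: "corr_dir (- k) = - corr_dir k"
  unfolding corr_dir_def using corr_uminus[of "k *\<^sub>R dir \<theta>"] by simp

lemma measurable_corr_dir [measurable]: "corr_dir \<in> borel_measurable borel"
  unfolding corr_dir_def by measurable

lemma abs_corr_dir_le: "\<bar>corr_dir k\<bar> \<le> corr_bound"
  unfolding corr_dir_def by (rule abs_corr_le)

lemma corr_dir_eq_0: "\<bar>k\<bar> \<ge> 2 * cutoff \<Longrightarrow> corr_dir k = 0"
  unfolding corr_dir_def by (intro corr_eq_0_outside) (simp add: norm_dir)

lemma corr_dir_sign: "k * corr_dir k \<le> 0"
  using corr_dir_nonpos[of k] corr_dir_nonpos[of "- k"] corr_dir_uminus[of k]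
  by (cases "k \<ge> 0") (auto simp: corr_dir_def mult_nonneg_nonpos mult_nonpos_nonneg)

lemma integrable_fourier_sgn_jump_corr_dir: "integrable lborel (\<lambda>k. fourier_sgn_jump s (c
    * k) * complex_of_real (corr_dir k))"
proof (rule integrable_bounded_ball_support[where M="sgn_jump_l1 s * corr_bound" and r="2 * cutoff"])
  show "(\<lambda>k. fourier_sgn_jump s (c * k)
      * complex_of_real (corr_dir k)) \<in> borel_measurable borel" by measurable
  show "norm (fourier_sgn_jump s (c * k) * complex_of_real (corr_dir k)) \<le> sgn_jump_l1 s
      * corr_bound" for k
    unfolding norm_mult norm_of_real using norm_fourier_sgn_jump_le abs_corr_dir_le
        sgn_jump_l1_nonneg by (intro mult_mono) auto
  show "k \<notin> ball 0 (2 * cutoff) \<Longrightarrow> fourier_sgn_jump s (c * k)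
      * complex_of_real (corr_dir k) = 0" for k
    using corr_dir_eq_0[of k] by simp
qed

lemma edge_response_diff_eq_sine: "edge_response s - edge_response 0 = complex_of_real (- A *
    (LINT k|lborel. sine_sgn_jump s k * corr_dir k))"
proof -
  define J where "J = (LINT k|lborel. fourier_sgn_jump s k * complex_of_real (corr_dir k))"
  have "edge_response s - edge_response 0 = \<i> * complex_of_real A * J"
    unfolding edge_response_diff_eq_fourier J_def corr_dir_def by (simp add: mult.assoc)
  have "J = (LINT k|lborel. fourier_sgn_jump s (0 + (- 1) * k) * complex_of_real (corr_dir (0 + (- 1) * k)))"
    unfolding J_def using lborel_integral_real_affine[of "-1" "\<lambda>k. fourier_sgn_jump s k
        * complex_of_real (corr_dir k)" 0] by simp
  also have "\<dots> = - (LINT k|lborel. fourier_sgn_jump s ((- 1) * k) * complex_of_real (corr_dir k))"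
    by (simp add: corr_dir_uminus)
  finally have J2: "J = - (LINT k|lborel. fourier_sgn_jump s ((- 1) * k) * complex_of_real (corr_dir k))" .
  have "2 * J = J - (- J)" by simp
  also have "\<dots> = (LINT k|lborel. fourier_sgn_jump s (1 * k) * complex_of_real (corr_dir k)) -
      (LINT k|lborel. fourier_sgn_jump s ((- 1) * k) * complex_of_real (corr_dir k))"
    using J2 by (simp add: J_def)
  also have "\<dots> = (LINT k|lborel. fourier_sgn_jump s (1 * k)
      * complex_of_real (corr_dir k) - fourier_sgn_jump s ((- 1) * k) * complex_of_real (corr_dir k))"
    by (rule Bochner_Integration.integral_diff[OF integrable_fourier_sgn_jump_corr_dir
        integrable_fourier_sgn_jump_corr_dir, symmetric])
  also have "\<dots> = (LINT k|lborel. 2 * \<i> * complex_of_real (sine_sgn_jump s k * corr_dir k))"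
    by (intro Bochner_Integration.integral_cong refl) (simp add: left_diff_distrib[symmetric]
        fourier_sgn_jump_diff)
  also have "\<dots> = 2 * \<i> * complex_of_real (LINT k|lborel. sine_sgn_jump s k * corr_dir k)"
    by (simp only: integral_mult_right_zero integral_complex_of_real)
  finally have "J = \<i> * complex_of_real (LINT k|lborel. sine_sgn_jump s k * corr_dir k)" by simp
  moreover have "\<i> * complex_of_real A * (\<i> * complex_of_real X) = complex_of_real (- A * X)" for X
    by (simp add: algebra_simps)
  ultimately show ?thesis using \<open>edge_response s - edge_response 0 = \<i> * complex_of_real A
      * J\<close> by simp
qed

text \<open>\<open>weight 0 = 0\<close> by the convention \<open>x / 0
    = 0\<close>; the value at a single point is irrelevant.\<close>
definition "weight k = - A * corr_dir k / (pi * k)"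

definition "rise s = (LINT k|lborel. weight k * (1 - cos (2 * pi * k * s)))"

lemma weight_nonneg: "weight k \<ge> 0"
proof -
  have "0 \<le> - A * (k * corr_dir k) / (pi * k\<^sup>2)"
    using A_pos corr_dir_sign[of k] by (intro divide_nonneg_nonneg) (auto simp: mult_le_0_iff)
  also have "- A * (k * corr_dir k) / (pi * k\<^sup>2) = weight k"
    by (cases "k = 0") (simp_all add: weight_def power2_eq_square)
  finally show ?thesis .
qed

lemma measurable_weight[measurable]: "weight \<in> borel_measurable borel"
  unfolding weight_def by measurable

lemma weight_le: "\<bar>k\<bar> \<ge> \<delta> \<Longrightarrow> \<delta> > 0
    \<Longrightarrow> weight k \<le> A * corr_bound / (pi * \<delta>)"
proof -
  assume k: "\<bar>k\<bar> \<ge> \<delta>" and d: "\<delta> > 0"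
  have "weight k = \<bar>weight k\<bar>" using weight_nonneg by simp
  also have "\<dots> = A * \<bar>corr_dir k\<bar> / (pi * \<bar>k\<bar>)" using A_pos
      by (simp add: weight_def abs_mult)
  also have "\<dots> \<le> A * corr_bound / (pi * \<delta>)"
    using k d A_pos abs_corr_dir_le corr_bound_nonneg by (intro frac_le mult_left_mono mult_pos_pos) auto
  finally show ?thesis .
qed

lemma weight_eq_0: "\<bar>k\<bar> \<ge> 2 * cutoff \<Longrightarrow> weight k = 0"
  by (simp add: weight_def corr_dir_eq_0)

lemma weight_eq: "- A * (sine_sgn_jump s k * corr_dir k) = weight k * (1 - cos (2 * pi * k * s))"
  by (simp add: weight_def sine_sgn_jump_eq)

lemma integrable_rise_integrand: "integrable lborel (\<lambda>k. weight k * (1 - cos (2 * pi * k * s)))"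
proof -
  have "integrable lborel (\<lambda>k. - A * (sine_sgn_jump s k * corr_dir k))"
  proof (rule integrable_bounded_ball_support[where M="A * (sgn_jump_l1 s * corr_bound)" and r="2 * cutoff"])
    show "(\<lambda>k. - A * (sine_sgn_jump s k * corr_dir k)) \<in> borel_measurable borel"
      unfolding weight_eq by measurable
    show "norm (- A * (sine_sgn_jump s k * corr_dir k)) \<le> A * (sgn_jump_l1 s * corr_bound)" for k
      using A_pos abs_sine_sgn_jump_le abs_corr_dir_le sgn_jump_l1_nonneg
      by (auto simp: abs_mult intro!: mult_left_mono mult_mono)
    show "k \<notin> ball 0 (2 * cutoff) \<Longrightarrow> - A * (sine_sgn_jump s k * corr_dir k) = 0" for k
      using corr_dir_eq_0[of k] by simp
  qed
  then show ?thesis unfolding weight_eq .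
qed

lemma edge_response_diff_eq_rise: "edge_response s - edge_response 0 = complex_of_real (rise s)"
  unfolding edge_response_diff_eq_sine rise_def weight_eq[symmetric] by simp

lemma rise_nonneg: "rise s \<ge> 0"
  unfolding rise_def by (intro integral_nonneg_AE AE_I2 mult_nonneg_nonneg weight_nonneg) auto

definition "rise_limit = - Re (edge_response 0)"

lemma rise_tendsto_edge_response_0: "((\<lambda>s. complex_of_real (rise s))
    \<longlongrightarrow> - edge_response 0) at_top"
  using tendsto_diff[OF edge_response_tendsto_0 tendsto_const[of "edge_response 0"]]
  by (simp add: edge_response_diff_eq_rise[symmetric])

lemma edge_response_0: "edge_response 0 = - complex_of_real rise_limit"
proof -
  have "((\<lambda>s. 0) \<longlongrightarrow> Im (- edge_response 0)) (at_top :: real filter)"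
    using tendsto_Im[OF rise_tendsto_edge_response_0] by simp
  then have "Im (edge_response 0) = 0"
    using tendsto_unique[OF trivial_limit_at_top_linorder _ tendsto_const] by fastforce
  then show ?thesis by (simp add: rise_limit_def complex_eq_iff)
qed

lemma rise_tendsto: "(rise \<longlongrightarrow> rise_limit) at_top"
  using tendsto_Re[OF rise_tendsto_edge_response_0] by (simp add: rise_limit_def)

lemma rise_limit_nonneg: "rise_limit \<ge> 0"
  by (rule tendsto_lowerbound[OF rise_tendsto]) (auto intro: always_eventually rise_nonneg)

end

section \<open>Bounding the rise by twice its limit\<close>

lemma integral_one_minus_cos_Icc:
  assumes m: "m > 0" and k: "k \<noteq> 0"
  shows "(LINT s|lborel. indicator {m..2 * m} s * (1 - cos (2 * pi * k * s)))
    = m - (sin (2 * pi * k * (2 * m)) - sin (2 * pi * k * m)) / (2 * pi * k)"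
proof -
  have "(LINT s|lborel. indicator {m..2 * m} s *\<^sub>R (1 - cos (2 * pi * k * s))) =
     (2 * m - sin (2 * pi * k * (2 * m)) / (2 * pi * k)) - (m - sin (2 * pi * k * m) / (2 * pi * k))"
  proof (rule integral_FTC_atLeastAtMost)
    fix x
    have "((\<lambda>s. s - sin (2 * pi * k * s) / (2 * pi * k)) has_real_derivative (1 - cos (2
        * pi * k * x)))
        (at x within {m..2 * m})"
      using k by (auto intro!: derivative_eq_intros simp: field_simps)
    then show "((\<lambda>s. s - sin (2 * pi * k * s) / (2 * pi
        * k)) has_vector_derivative (1 - cos (2 * pi * k * x)))
        (at x within {m..2 * m})"
      by (simp add: has_real_derivative_iff_has_vector_derivative)
  qed (use m in \<open>auto intro!: continuous_intros\<close>)
  then show ?thesis by (simp add: diff_divide_distrib)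
qed

lemma integral_one_minus_cos_Icc_ge:
  assumes m: "m > 0" and k: "\<bar>k\<bar> > \<delta>" and d: "\<delta> > 0"
  shows "(LINT s|lborel. indicator {m..2 * m} s * (1 - cos (2 * pi * k * s))) \<ge> m - 1 / (pi * \<delta>)"
proof -
  define X where "X = sin (2 * pi * k * (2 * m)) - sin (2 * pi * k * m)"
  have "\<bar>X\<bar> \<le> 2"
    using abs_sin_le_one[of "2 * pi * k * (2 * m)"] abs_sin_le_one[of "2 * pi * k * m"]
    unfolding X_def by linarith
  then have "\<bar>X\<bar> / (2 * pi * \<bar>k\<bar>) \<le> 2 / (2 * pi * \<bar>k\<bar>)"
    by (rule divide_right_mono) simp
  then have "\<bar>X / (2 * pi * k)\<bar> \<le> 2 / (2 * pi * \<bar>k\<bar>)"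
    by (simp add: abs_divide abs_mult)
  also have "\<dots> \<le> 1 / (pi * \<delta>)"
    using k d by (simp add: frac_le)
  finally have "\<bar>X / (2 * pi * k)\<bar> \<le> 1 / (pi * \<delta>)" .
  moreover have "k \<noteq> 0" using k d by auto
  ultimately show ?thesis
    unfolding integral_one_minus_cos_Icc[OF m \<open>k \<noteq> 0\<close>] X_def[symmetric] by linarith
qed

context half_disk_illumination
begin

definition "trunc_weight \<delta> k = weight k * indicator {k. \<delta> < \<bar>k\<bar>} k"

definition "trunc_rise \<delta> s = (LINT k|lborel. trunc_weight \<delta> k * (1 - cos (2 * pi * k * s)))"

lemma measurable_trunc_weight [measurable]: "trunc_weight \<delta> \<in> borel_measurable borel"
  unfolding trunc_weight_def by measurable

lemma trunc_weight_nonneg: "trunc_weight \<delta> k \<ge> 0"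
  by (simp add: trunc_weight_def weight_nonneg)

lemma trunc_weight_le: "trunc_weight \<delta> k \<le> weight k"
  by (simp add: trunc_weight_def weight_nonneg indicator_def)

lemma integrable_trunc_weight:
  assumes d: "\<delta> > 0"
  shows "integrable lborel (trunc_weight \<delta>)"
proof (rule integrable_bounded_ball_support[where M="A * corr_bound / (pi * \<delta>)" and r="2 * cutoff"])
  show "norm (trunc_weight \<delta> k) \<le> A * corr_bound / (pi * \<delta>)" for k
    using weight_le[of \<delta> k] d trunc_weight_nonneg[of \<delta> k] A_pos corr_bound_nonneg
    by (auto simp: trunc_weight_def indicator_def)
  show "k \<notin> ball 0 (2 * cutoff) \<Longrightarrow> trunc_weight \<delta> k = 0" for k
    using weight_eq_0[of k] by (simp add: trunc_weight_def)
qed simp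

lemma abs_trunc_weight_one_minus_cos_le:
  "\<bar>trunc_weight \<delta> k * (1 - cos x)\<bar> \<le> 2 * trunc_weight \<delta> k"
proof -
  have c: "0 \<le> 1 - cos x" "1 - cos x \<le> 2" using abs_cos_le_one[of x] by (auto simp: abs_le_iff)
  have "trunc_weight \<delta> k * (1 - cos x) \<le> trunc_weight \<delta> k * 2"
    by (rule mult_left_mono[OF c(2) trunc_weight_nonneg])
  then show ?thesis
    using c(1) trunc_weight_nonneg[of \<delta> k] by (simp add: abs_mult mult.commute)
qed

lemma integrable_trunc_rise_integrand:
  assumes "\<delta> > 0"
  shows "integrable lborel (\<lambda>k. trunc_weight \<delta> k * (1 - cos (2 * pi * k * s)))"
  by (rule Bochner_Integration.integrable_bound[OF integrable_mult_right[OF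
      integrable_trunc_weight[OF assms], of 2]])
     (use abs_trunc_weight_one_minus_cos_le trunc_weight_nonneg in auto)

lemma trunc_rise_le: "\<delta> > 0 \<Longrightarrow> trunc_rise \<delta> s \<le> 2 *
    (LINT k|lborel. trunc_weight \<delta> k)"
  unfolding trunc_rise_def integral_mult_right_zero[symmetric]
  by (intro Bochner_Integration.integral_mono integrable_trunc_rise_integrand integrable_mult_right
      integrable_trunc_weight) (use abs_trunc_weight_one_minus_cos_le abs_le_D1 in blast)+

lemma trunc_rise_nonneg: "trunc_rise \<delta> s \<ge> 0"
  unfolding trunc_rise_def
  by (intro integral_nonneg_AE AE_I2 mult_nonneg_nonneg trunc_weight_nonneg) (simp add: cos_le_one)

lemma trunc_rise_le_rise: "\<delta> > 0 \<Longrightarrow> trunc_rise \<delta> s \<le> rise s"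
  unfolding trunc_rise_def rise_def
  by (intro Bochner_Integration.integral_mono integrable_trunc_rise_integrand integrable_rise_integrand
      mult_right_mono trunc_weight_le) (use cos_le_one in auto)

lemma measurable_trunc_rise [measurable]: "trunc_rise \<delta> \<in> borel_measurable borel"
proof -
  have "(\<lambda>(s, k). trunc_weight \<delta> k * (1 - cos (2 * pi * k
      * s))) \<in> borel_measurable (lborel \<Otimes>\<^sub>M lborel)"
    by measurable
  then have "(\<lambda>s. LINT k|lborel. trunc_weight \<delta> k * (1 - cos (2 * pi * k
      * s))) \<in> borel_measurable lborel"
    by (rule lborel.borel_measurable_lebesgue_integral[where f="\<lambda>s k. trunc_weight \<delta>
        k * (1 - cos (2 * pi * k * s))"])
  then show ?thesis by (simp add: trunc_rise_def[abs_def])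
qed

lemma average_trunc_rise:
  assumes d: "\<delta> > 0" and m: "m > 0"
  shows "integrable lborel
      (\<lambda>k. trunc_weight \<delta> k * (LINT s|lborel. indicator {m..2 * m} s * (1 - cos (2
          * pi * k * s))))"
    and "(LINT s|lborel. indicator {m..2 * m} s * trunc_rise \<delta> s) =
      (LINT k|lborel. trunc_weight \<delta> k * (LINT s|lborel. indicator {m..2 * m} s
          * (1 - cos (2 * pi * k * s))))"
proof -
  define F where "F k s = trunc_weight \<delta> k * (indicator {m..2 * m} s * (1 - cos (2 * pi * k * s)))"
    for k s :: real
  have int: "integrable (lborel \<Otimes>\<^sub>M lborel) (case_prod F)"
  proof (rule Bochner_Integration.integrable_bound)
    show "integrable (lborel \<Otimes>\<^sub>M lborel) (\<lambda>x. 2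
        * trunc_weight \<delta> (fst x) * indicator {m..2 * m} (snd x))"
      by (intro integrable_lborel_product integrable_mult_right integrable_trunc_weight d
          integrable_real_indicator)
         (simp_all add: emeasure_lborel_Icc_eq)
    show "case_prod F \<in> borel_measurable (lborel \<Otimes>\<^sub>M lborel)" unfolding F_def by measurable
    show "AE x in lborel \<Otimes>\<^sub>M lborel. norm (case_prod F x) \<le> norm (2
        * trunc_weight \<delta> (fst x) * indicator {m..2 * m} (snd x))"
      using abs_trunc_weight_one_minus_cos_le trunc_weight_nonneg
      by (intro AE_I2) (auto simp: F_def indicator_def abs_mult)
  qed
  have marginal: "(LINT s|lborel. F k s) = trunc_weight \<delta> k *
      (LINT s|lborel. indicator {m..2 * m} s * (1 - cos (2 * pi * k * s)))" for k
    by (simp add: F_def)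
  show "integrable lborel
      (\<lambda>k. trunc_weight \<delta> k * (LINT s|lborel. indicator {m..2 * m} s * (1 - cos (2
          * pi * k * s))))"
    using lborel_pair.integrable_fst'[OF int] by (simp add: marginal)
  have inner: "(LINT k|lborel. F k s) = indicator {m..2 * m} s * trunc_rise \<delta> s" for s
  proof -
    have "(LINT k|lborel. F k s)
        = (LINT k|lborel. indicator {m..2 * m} s * (trunc_weight \<delta> k * (1 - cos (2 * pi * k * s))))"
      unfolding F_def by (rule Bochner_Integration.integral_cong) (simp_all add: mult.left_commute)
    then show ?thesis by (simp add: trunc_rise_def)
  qed
  have "(LINT k|lborel. LINT s|lborel. F k s) = (LINT s|lborel. LINT k|lborel. F k s)"
    by (rule lborel_pair.Fubini_integral[OF int, symmetric])
  then show "(LINT s|lborel. indicator {m..2 * m} s * trunc_rise \<delta> s) =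
      (LINT k|lborel. trunc_weight \<delta> k * (LINT s|lborel. indicator {m..2 * m} s
          * (1 - cos (2 * pi * k * s))))"
    by (simp only: marginal inner)
qed

lemma average_trunc_rise_ge:
  assumes d: "\<delta> > 0" and m: "m > 0"
  shows "(m - 1 / (pi * \<delta>)) * (LINT k|lborel. trunc_weight \<delta> k)
    \<le> (LINT s|lborel. indicator {m..2 * m} s * trunc_rise \<delta> s)"
proof -
  have "(m - 1 / (pi * \<delta>)) * (LINT k|lborel. trunc_weight \<delta> k)
      = (LINT k|lborel. (m - 1 / (pi * \<delta>)) * trunc_weight \<delta> k)"
    by simp
  also have "\<dots> \<le> (LINT k|lborel. trunc_weight \<delta> k
      * (LINT s|lborel. indicator {m..2 * m} s * (1 - cos (2 * pi * k * s))))"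
  proof (rule Bochner_Integration.integral_mono[OF _ average_trunc_rise(1)[OF d m]])
    show "integrable lborel (\<lambda>k. (m - 1 / (pi * \<delta>)) * trunc_weight \<delta> k)"
      using integrable_trunc_weight[OF d] by simp
    show "(m - 1 / (pi * \<delta>)) * trunc_weight \<delta> k
        \<le> trunc_weight \<delta> k * (LINT s|lborel. indicator {m..2 * m} s * (1 - cos (2 * pi
            * k * s)))" for k
    proof (cases "\<delta> < \<bar>k\<bar>")
      case True
      then show ?thesis
        using mult_left_mono[OF integral_one_minus_cos_Icc_ge[OF m True d] trunc_weight_nonneg[of \<delta> k]]
        by (simp add: mult.commute)
    qed (simp add: trunc_weight_def)
  qed
  also have "\<dots> = (LINT s|lborel. indicator {m..2 * m} s * trunc_rise \<delta> s)"
    by (rule average_trunc_rise(2)[OF d m, symmetric])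
  finally show ?thesis .
qed

lemma average_trunc_rise_le:
  assumes d: "\<delta> > 0" and m: "m > 0" and le: "\<And>s. s \<in> {m..2 * m}
      \<Longrightarrow> rise s \<le> c"
  shows "(LINT s|lborel. indicator {m..2 * m} s * trunc_rise \<delta> s) \<le> c * m"
proof -
  define P where "P = (LINT k|lborel. trunc_weight \<delta> k)"
  have fin: "integrable lborel (\<lambda>s. indicator {m..2 * m} s * c')" for c' :: real
    using m by (intro integrable_mult_left integrable_real_indicator) (auto simp: emeasure_lborel_Icc_eq)
  have "(LINT s|lborel. indicator {m..2 * m} s * trunc_rise \<delta> s) \<le>
      (LINT s|lborel. indicator {m..2 * m} s * c)"
  proof (rule Bochner_Integration.integral_mono[OF _ fin])
    show "integrable lborel (\<lambda>s. indicator {m..2 * m} s * trunc_rise \<delta> s)"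
    proof (rule Bochner_Integration.integrable_bound[OF fin[of "2 * P"]])
      show "AE s in lborel. norm (indicator {m..2 * m} s * trunc_rise \<delta> s)
          \<le> norm (indicator {m..2 * m} s * (2 * P))"
        using trunc_rise_le[OF d, folded P_def] trunc_rise_nonneg[of \<delta>]
        by (intro AE_I2) (auto simp: indicator_def intro: order_trans[OF _ abs_ge_self])
    qed simp
    show "indicator {m..2 * m} s * trunc_rise \<delta> s \<le> indicator {m..2 * m} s * c" for s
      using trunc_rise_le_rise[OF d, of s] le[of s] by (auto simp: indicator_def)
  qed
  also have "\<dots> = c * m"
    using m by (simp add: measure_lborel_Icc mult.commute)
  finally show ?thesis .
qed

text \<open>A Riemann--Lebesgue argument in averaged form: the mean of \<open>rise\<close> over
    \<open>[m, 2m]\<close> tends to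
  \<open>rise_limit\<close>, while the truncated weight contributes at least \<open>(1 - 1/(pi
      \<delta> m))\<close> times its mass.\<close>
lemma integral_trunc_weight_le:
  assumes d: "\<delta> > 0"
  shows "(LINT k|lborel. trunc_weight \<delta> k) \<le> rise_limit"
proof (rule field_le_epsilon)
  fix e :: real assume e: "e > 0"
  define P where "P = (LINT k|lborel. trunc_weight \<delta> k)"
  have P: "P \<ge> 0" unfolding P_def by (intro integral_nonneg_AE AE_I2 trunc_weight_nonneg)
  have "eventually (\<lambda>s. rise s < rise_limit + e / 2) at_top"
    using order_tendstoD(2)[OF rise_tendsto, of "rise_limit + e / 2"] e by simp
  then obtain S where S: "\<And>s. s \<ge> S \<Longrightarrow> rise s \<le> rise_limit + e / 2"
    unfolding eventually_at_top_linorder by (meson less_imp_le)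
  define m where "m = max (max S 1) (2 * P / (pi * \<delta> * e))"
  have m: "m > 0" "m \<ge> S" "2 * P / (pi * \<delta> * e) \<le> m" unfolding m_def by auto
  have "(m - 1 / (pi * \<delta>)) * P \<le> (LINT s|lborel. indicator {m..2 * m} s * trunc_rise \<delta> s)"
    unfolding P_def by (rule average_trunc_rise_ge[OF d m(1)])
  also have "\<dots> \<le> (rise_limit + e / 2) * m"
    by (rule average_trunc_rise_le[OF d m(1)]) (use S m(2) in auto)
  finally have "m * P - P / (pi * \<delta>) \<le> m * rise_limit + e * m / 2"
    by (simp add: algebra_simps)
  moreover have "P / (pi * \<delta>) \<le> e * m / 2"
    using m(3) d e by (simp add: field_simps)
  ultimately have "m * P \<le> m * rise_limit + e * m"
    by linarith
  then have "m * P \<le> m * (rise_limit + e)"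
    by (simp add: distrib_left mult.commute[of e m])
  then show "P \<le> rise_limit + e"
    using m(1) by simp
qed

lemma trunc_rise_tendsto: "(\<lambda>j. trunc_rise (1 / real (Suc j)) t) \<longlonglongrightarrow> rise t"
  unfolding trunc_rise_def rise_def
proof (rule integral_dominated_convergence[where w="\<lambda>k. weight k * (1 - cos (2 * pi * k * t))"])
  show "AE k in lborel. (\<lambda>j. trunc_weight (1 / real (Suc j)) k * (1 - cos (2 * pi * k * t)))
      \<longlonglongrightarrow> weight k * (1 - cos (2 * pi * k * t))"
  proof (rule AE_I2, rule tendsto_eventually)
    fix k :: real
    show "eventually (\<lambda>j. trunc_weight (1 / real (Suc j)) k * (1 - cos (2 * pi * k * t))
        = weight k * (1 - cos (2 * pi * k * t))) sequentially"
    proof (cases "k = 0")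
      case False
      then have "eventually (\<lambda>j. 1 / real (Suc j) < \<bar>k\<bar>) sequentially"
        using order_tendstoD(2)[OF LIMSEQ_inverse_real_of_nat, of "\<bar>k\<bar>"]
        by (simp add: inverse_eq_divide)
      then show ?thesis by eventually_elim (simp add: trunc_weight_def)
    qed (simp add: trunc_weight_def weight_def)
  qed
  show "AE k in lborel. norm (trunc_weight (1 / real (Suc j)) k * (1 - cos (2 * pi * k * t)))
      \<le> weight k * (1 - cos (2 * pi * k * t))" for j
    using trunc_weight_nonneg trunc_weight_le cos_le_one
    by (intro AE_I2) (auto simp: abs_mult intro!: mult_right_mono)
qed (use integrable_rise_integrand in simp_all)

lemma rise_le_twice_rise_limit: "rise t \<le> 2 * rise_limit"
proof (rule LIMSEQ_le_const2[OF trunc_rise_tendsto], intro exI allI impI)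
  fix j :: nat
  have "trunc_rise (1 / real (Suc j)) t \<le> 2 * (LINT k|lborel. trunc_weight (1 / real (Suc j)) k)"
    by (rule trunc_rise_le) simp
  also have "\<dots> \<le> 2 * rise_limit"
    using integral_trunc_weight_le[of "1 / real (Suc j)"] by simp
  finally show "trunc_rise (1 / real (Suc j)) t \<le> 2 * rise_limit" .
qed

lemma norm_edge_response_le: "norm (edge_response t) \<le> norm (edge_response 0)"
proof -
  have "edge_response t = complex_of_real (rise t - rise_limit)"
    using edge_response_diff_eq_rise[of t] edge_response_0 by (simp add: algebra_simps)
  then have "norm (edge_response t) = \<bar>rise t - rise_limit\<bar>" by (simp only: norm_of_real)
  also have "\<dots> \<le> rise_limit" using rise_nonneg[of t] rise_le_twice_rise_limit[of t] by simp
  also have "\<dots> = norm (edge_response 0)" using edge_response_0 rise_limit_nonneg by simp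
  finally show ?thesis .
qed

end

theorem lemma2:
  fixes lam NA A \<theta> :: real and q :: "real \<times> real \<Rightarrow> real"
  assumes "lam > 0" and "NA > 0" and "A > 0"
    and "\<And>\<rho>. q \<rho> \<ge> 0"
    and "q \<in> borel_measurable lborel"
    and "\<exists>B. \<forall>\<rho>. q \<rho> \<le> B"
    and "\<And>\<rho>. \<rho> \<notin> half_disk lam NA \<theta> \<Longrightarrow> q \<rho> = 0"
  shows "\<forall>r. let v = (- sin \<theta>, cos \<theta>);
               g = conv2 (inv_FT2 (Htilde A lam NA q)) (step_edge \<theta>)
           in norm (g r) \<le> norm (g ((r \<bullet> v) *\<^sub>R v))"
proof
  fix r :: "real \<times> real"
  interpret half_disk_illumination lam NA A \<theta> q
    by unfold_locales (use assms in auto)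
  have "(- sin \<theta>, cos \<theta>) = dir_perp \<theta>"
    by (simp add: dir_perp_def)
  moreover have "dir_perp \<theta> \<bullet> dir \<theta> = 0"
    by (simp add: dir_def dir_perp_def inner_prod_def)
  ultimately show "let v = (- sin \<theta>, cos \<theta>);
               g = conv2 (inv_FT2 (Htilde A lam NA q)) (step_edge \<theta>)
           in norm (g r) \<le> norm (g ((r \<bullet> v) *\<^sub>R v))"
    by (simp add: Let_def conv2_eq_edge_response norm_edge_response_le)
qed

end
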